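(* Let $Q=[u_1,\dots,u_n]$ be a spherical polygon with exactly one self-intersection, occurring at a point $w$ where the edges $u_iu_{i+1}$ and $u_ju_{j+1}$ cross, and suppose no other vertex of $Q$ lies in the spherical triangle with vertices $u_i,u_j,w$ nor in the spherical triangle with vertices $u_{i+1},u_{j+1},w$. Let $Q'=[u_i,u_j,u_{j-1},\dots,u_{i+2},u_{i+1},u_{j+1},u_{j+2},\dots,u_{i-1}]$. If $D^+,I$ (resp. $D'^+,I'$) denote the numbers of self-intersections and inflections of $Q$ (resp. $Q'$), then $2D^++I\ge 2D'^++I'$.
   Context: A spherical polygon has edges the minimal great-circle arcs between consecutive vertices (indices cyclic). Standing assumption: no three vertices lie on a common great circle. A self-intersection is a pair of non-adjacent edges that intersect. With $[a,b,c]$ the determinant, $\{u_k,u_{k+1}\}$ is an inflection if $[u_{k-1},u_k,u_{k+1}]$ and $[u_k,u_{k+1},u_{k+2}]$ have opposite signs. *)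

theory Defs
  imports "HOL-Analysis.Analysis"
begin

(* Spherical polygons with n vertices u 0, ..., u (n-1) (0-based, indices cyclic mod n) on the
   unit sphere in R^3. *)

definition det3 :: "real^3 \<Rightarrow> real^3 \<Rightarrow> real^3 \<Rightarrow> real" where
  "det3 a b c = det ((\<chi> r. if r = 1 then a else if r = 2 then b else c) :: real^3^3)"

definition vtx :: "nat \<Rightarrow> (nat \<Rightarrow> real^3) \<Rightarrow> nat \<Rightarrow> real^3" where
  "vtx n u k = u (k mod n)"

(* spherical polygon + standing assumption: no three vertices on a common great circle *)
definition sph_polygon :: "nat \<Rightarrow> (nat \<Rightarrow> real^3) \<Rightarrow> bool" where
  "sph_polygon n u \<longleftrightarrow> 3 \<le> n \<and> (\<forall>k<n. norm (u k) = 1) \<and>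
     (\<forall>a<n. \<forall>b<n. \<forall>c<n. a \<noteq> b \<and> b \<noteq> c \<and> a \<noteq> c \<longrightarrow> det3 (u a) (u b) (u c) \<noteq> 0)"

(* minimal great-circle arc between two non-antipodal unit vectors *)
definition sph_arc :: "real^3 \<Rightarrow> real^3 \<Rightarrow> (real^3) set" where
  "sph_arc a b = {x. \<exists>t\<in>{0..1}. x = (1 / norm ((1 - t) *\<^sub>R a + t *\<^sub>R b)) *\<^sub>R ((1 - t) *\<^sub>R a + t *\<^sub>R b)}"

definition edge :: "nat \<Rightarrow> (nat \<Rightarrow> real^3) \<Rightarrow> nat \<Rightarrow> (real^3) set" where
  "edge n u k = sph_arc (vtx n u k) (vtx n u (Suc k))"

definition adjacent_edges :: "nat \<Rightarrow> nat \<Rightarrow> nat \<Rightarrow> bool" where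
  "adjacent_edges n k l \<longleftrightarrow> k = l \<or> Suc k mod n = l \<or> Suc l mod n = k"

definition self_intersections :: "nat \<Rightarrow> (nat \<Rightarrow> real^3) \<Rightarrow> (nat \<times> nat) set" where
  "self_intersections n u = {(k, l). k < l \<and> l < n \<and> \<not> adjacent_edges n k l \<and>
      edge n u k \<inter> edge n u l \<noteq> {}}"

definition num_self_intersections :: "nat \<Rightarrow> (nat \<Rightarrow> real^3) \<Rightarrow> nat" where
  "num_self_intersections n u = card (self_intersections n u)"

definition is_inflection :: "nat \<Rightarrow> (nat \<Rightarrow> real^3) \<Rightarrow> nat \<Rightarrow> bool" where
  "is_inflection n u k \<longleftrightarrow>
     det3 (vtx n u (k + n - 1)) (vtx n u k) (vtx n u (k + 1)) *
     det3 (vtx n u k) (vtx n u (k + 1)) (vtx n u (k + 2)) < 0"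

definition num_inflections :: "nat \<Rightarrow> (nat \<Rightarrow> real^3) \<Rightarrow> nat" where
  "num_inflections n u = card {k. k < n \<and> is_inflection n u k}"

definition sph_triangle :: "real^3 \<Rightarrow> real^3 \<Rightarrow> real^3 \<Rightarrow> (real^3) set" where
  "sph_triangle a b c = {x. norm x = 1 \<and>
     (\<exists>\<alpha> \<beta> \<gamma>. \<alpha> \<ge> 0 \<and> \<beta> \<ge> 0 \<and> \<gamma> \<ge> 0 \<and> x = \<alpha> *\<^sub>R a + \<beta> *\<^sub>R b + \<gamma> *\<^sub>R c)}"

(* Q' = [u_i, u_j, u_(j-1), ..., u_(i+1), u_(j+1), u_(j+2), ..., u_(i-1)] (indices mod n) *)
definition two_opt :: "nat \<Rightarrow> (nat \<Rightarrow> real^3) \<Rightarrow> nat \<Rightarrow> nat \<Rightarrow> nat \<Rightarrow> real^3" where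
  "two_opt n u i j k =
     (let m = (j + n - i) mod n in
      if k = 0 then u i
      else if k \<le> m then u ((j + n + 1 - k) mod n)
      else u ((j + k - m) mod n))"

end

theory Submission
  imports Defs
begin

(* Rotate the labels so that the crossing edges are u0 u1 and uj uj+1; the 2-opt move replaces
   them by the diagonals u0 uj and u1 uj+1 and reverses the path u1 ... uj.  Write the crossing
   point as w = p u0 + q u1 = r uj + t uj+1 with positive weights.  The new polygon is simple:
   the two diagonals are disjoint by linear algebra with these weights, and an edge meeting a
   diagonal would enter one of the empty triangles u0 uj w, u1 uj+1 w and could only leave it
   through a crossing edge, creating a second crossing.  So 2D+ drops by 2, and it remains to
   see that at most two inflections appear.  Inflections are sign changes of the turning
   determinants [u(k-1), uk, u(k+1)]: along the reversed path these are reversed and negated,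
   so their sign changes are preserved, while the empty triangles give one sign constraint at
   each of u0, u1, uj, uj+1, which allows at most two new sign changes at the switch. *)

subsection \<open>Determinants, cones and spherical arcs\<close>

lemma det3_expand:
  "det3 a b c = a$1 * (b$2 * c$3 - b$3 * c$2) - a$2 * (b$1 * c$3 - b$3 * c$1) + a$3 * (b$1 * c$2 - b$2 * c$1)"
  unfolding det3_def by (simp add: det_3 algebra_simps)

lemma det3_linear:
  "det3 (a + a') b c = det3 a b c + det3 a' b c"
  "det3 a (b + b') c = det3 a b c + det3 a b' c"
  "det3 a b (c + c') = det3 a b c + det3 a b c'"
  "det3 (a - a') b c = det3 a b c - det3 a' b c"
  "det3 a (b - b') c = det3 a b c - det3 a b' c"
  "det3 a b (c - c') = det3 a b c - det3 a b c'"
  "det3 (x *\<^sub>R a) b c = x * det3 a b c"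
  "det3 a (x *\<^sub>R b) c = x * det3 a b c"
  "det3 a b (x *\<^sub>R c) = x * det3 a b c"
  by (simp_all add: det3_expand algebra_simps)

lemma det3_degenerate:
  "det3 0 b c = 0" "det3 a 0 c = 0" "det3 a b 0 = 0"
  "det3 a a c = 0" "det3 a b a = 0" "det3 a b b = 0"
  by (simp_all add: det3_expand algebra_simps)

lemmas det3_simps = det3_linear det3_degenerate

lemma det3_swap:
  "det3 a b c = - det3 b a c" "det3 a b c = - det3 c b a" "det3 a b c = - det3 a c b"
  by (simp_all add: det3_expand algebra_simps)

lemma det3_rotate: "det3 a b c = det3 b c a"
  by (simp add: det3_expand algebra_simps)

lemma det3_cramer_scaled:
  "det3 a b c *\<^sub>R x = det3 x b c *\<^sub>R a + det3 a x c *\<^sub>R b + det3 a b x *\<^sub>R c"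
proof -
  have "(det3 a b c *\<^sub>R x) $ k = (det3 x b c *\<^sub>R a + det3 a x c *\<^sub>R b + det3 a b x *\<^sub>R c) $ k" for k
  proof -
    have "k = 1 \<or> k = 2 \<or> k = 3" using exhaust_3 by blast
    then show ?thesis
      unfolding det3_expand vector_add_component vector_scaleR_component
      by (elim disjE; simp add: algebra_simps)
  qed
  then show ?thesis by (simp add: vec_eq_iff)
qed

lemma det3_cramer:
  assumes "det3 a b c \<noteq> 0"
  shows "x = (det3 x b c / det3 a b c) *\<^sub>R a + (det3 a x c / det3 a b c) *\<^sub>R b
           + (det3 a b x / det3 a b c) *\<^sub>R c"
proof -
  have "x = (1 / det3 a b c) *\<^sub>R (det3 a b c *\<^sub>R x)" using assms by simp
  also have "\<dots> = (det3 x b c / det3 a b c) *\<^sub>R a + (det3 a x c / det3 a b c) *\<^sub>R b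
                     + (det3 a b x / det3 a b c) *\<^sub>R c"
    by (simp only: det3_cramer_scaled[of a b c x]) (simp add: scaleR_add_right)
  finally show ?thesis .
qed

lemma det3_nonzero_independent:
  assumes "det3 a b c \<noteq> 0" "\<alpha> *\<^sub>R a + \<beta> *\<^sub>R b + \<gamma> *\<^sub>R c = 0"
  shows "\<alpha> = 0 \<and> \<beta> = 0 \<and> \<gamma> = 0"
proof -
  have "det3 (\<alpha> *\<^sub>R a + \<beta> *\<^sub>R b + \<gamma> *\<^sub>R c) b c = 0" "det3 a (\<alpha> *\<^sub>R a + \<beta> *\<^sub>R b + \<gamma> *\<^sub>R c) c = 0"
       "det3 a b (\<alpha> *\<^sub>R a + \<beta> *\<^sub>R b + \<gamma> *\<^sub>R c) = 0"
    using assms(2) by (simp_all add: det3_simps)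
  then have "\<alpha> * det3 a b c = 0" "\<beta> * det3 a b c = 0" "\<gamma> * det3 a b c = 0"
    by (simp_all add: det3_simps)
  then show ?thesis using assms(1) by simp
qed

lemma mult_neg_same_sign: "(x::real) * s < 0 \<Longrightarrow> y * s < 0 \<Longrightarrow> 0 < x * y"
  by (auto simp: mult_less_0_iff zero_less_mult_iff)

lemma mult_pos_same_sign: "0 < (x::real) * s \<Longrightarrow> 0 < y * s \<Longrightarrow> 0 < x * y"
  by (auto simp: zero_less_mult_iff)

definition in_cone :: "real^3 \<Rightarrow> real^3 \<Rightarrow> real^3 \<Rightarrow> bool" where
  "in_cone a b y \<longleftrightarrow> (\<exists>\<mu> \<nu>. \<mu> \<ge> 0 \<and> \<nu> \<ge> 0 \<and> y = \<mu> *\<^sub>R a + \<nu> *\<^sub>R b)"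

definition in_cone3 :: "real^3 \<Rightarrow> real^3 \<Rightarrow> real^3 \<Rightarrow> real^3 \<Rightarrow> bool" where
  "in_cone3 a b c x \<longleftrightarrow>
     (\<exists>\<alpha> \<beta> \<gamma>. \<alpha> \<ge> 0 \<and> \<beta> \<ge> 0 \<and> \<gamma> \<ge> 0 \<and> x = \<alpha> *\<^sub>R a + \<beta> *\<^sub>R b + \<gamma> *\<^sub>R c)"

lemma in_coneI: "\<mu> \<ge> 0 \<Longrightarrow> \<nu> \<ge> 0 \<Longrightarrow> y = \<mu> *\<^sub>R a + \<nu> *\<^sub>R b \<Longrightarrow> in_cone a b y"
  unfolding in_cone_def by blast

lemma in_cone3I:
  "\<alpha> \<ge> 0 \<Longrightarrow> \<beta> \<ge> 0 \<Longrightarrow> \<gamma> \<ge> 0 \<Longrightarrow> x = \<alpha> *\<^sub>R a + \<beta> *\<^sub>R b + \<gamma> *\<^sub>R c \<Longrightarrow> in_cone3 a b c x"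
  unfolding in_cone3_def by auto

lemma in_cone_commute: "in_cone a b y \<longleftrightarrow> in_cone b a y"
  unfolding in_cone_def by (metis add.commute)

lemma in_cone3_commute: "in_cone3 a b c x \<longleftrightarrow> in_cone3 b a c x"
proof -
  have *: "in_cone3 b a c x" if "in_cone3 a b c x" for a b
  proof -
    from that obtain \<alpha> \<beta> \<gamma> where "\<alpha> \<ge> 0" "\<beta> \<ge> 0" "\<gamma> \<ge> 0"
      and x: "x = \<alpha> *\<^sub>R a + \<beta> *\<^sub>R b + \<gamma> *\<^sub>R c"
      unfolding in_cone3_def by auto
    moreover have "x = \<beta> *\<^sub>R b + \<alpha> *\<^sub>R a + \<gamma> *\<^sub>R c" unfolding x by simp
    ultimately show ?thesis unfolding in_cone3_def by auto
  qed
  show ?thesis using *[of a b] *[of b a] by blast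
qed

lemma sph_triangle_iff: "x \<in> sph_triangle a b c \<longleftrightarrow> norm x = 1 \<and> in_cone3 a b c x"
  unfolding sph_triangle_def in_cone3_def by simp

lemma sph_arc_in_cone:
  assumes "det3 a b c \<noteq> 0" "x \<in> sph_arc a b"
  shows "in_cone a b x \<and> x \<noteq> 0"
proof -
  obtain t where t: "t \<in> {0..1}"
    and x: "x = (1 / norm ((1 - t) *\<^sub>R a + t *\<^sub>R b)) *\<^sub>R ((1 - t) *\<^sub>R a + t *\<^sub>R b)"
    using assms(2) unfolding sph_arc_def by blast
  define v where "v = (1 - t) *\<^sub>R a + t *\<^sub>R b"
  have "v \<noteq> 0"
  proof
    assume "v = 0"
    then have "det3 v b c = 0" "det3 a v c = 0" by (simp_all add: det3_simps)
    then have "(1 - t) * det3 a b c = 0" "t * det3 a b c = 0" unfolding v_def by (simp_all add: det3_simps)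
    then show False using assms(1) by simp
  qed
  then have N: "norm v > 0" by simp
  have "x = ((1 - t) / norm v) *\<^sub>R a + (t / norm v) *\<^sub>R b"
    using x unfolding v_def[symmetric] by (simp add: v_def scaleR_add_right divide_inverse mult.commute)
  moreover have "(1 - t) / norm v \<ge> 0" "t / norm v \<ge> 0" using t N by auto
  ultimately have "in_cone a b x" unfolding in_cone_def by blast
  moreover have "x \<noteq> 0" using x \<open>v \<noteq> 0\<close> N unfolding v_def[symmetric] by simp
  ultimately show ?thesis by blast
qed

lemma normalize_in_sph_arc:
  assumes "in_cone a b y" "y \<noteq> 0"
  shows "(1 / norm y) *\<^sub>R y \<in> sph_arc a b"
proof -
  obtain \<mu> \<nu> where m: "\<mu> \<ge> 0" "\<nu> \<ge> 0" "y = \<mu> *\<^sub>R a + \<nu> *\<^sub>R b"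
    using assms(1) unfolding in_cone_def by blast
  have s: "\<mu> + \<nu> > 0" using m assms(2) by (cases "\<mu> = 0"; cases "\<nu> = 0") auto
  define t where "t = \<nu> / (\<mu> + \<nu>)"
  have t01: "t \<in> {0..1}" using s m unfolding t_def by auto
  have "1 - t = \<mu> / (\<mu> + \<nu>)" using s unfolding t_def by (simp add: field_simps)
  then have v: "(1 - t) *\<^sub>R a + t *\<^sub>R b = (1 / (\<mu> + \<nu>)) *\<^sub>R y"
    unfolding t_def m(3) by (simp add: scaleR_add_right divide_inverse mult.commute)
  have "(1 / norm y) *\<^sub>R y = (1 / norm ((1 - t) *\<^sub>R a + t *\<^sub>R b)) *\<^sub>R ((1 - t) *\<^sub>R a + t *\<^sub>R b)"
    unfolding v using s assms(2) by (simp add: field_simps)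
  then show ?thesis unfolding sph_arc_def mem_Collect_eq using t01 by (rule bexI)
qed

lemma sph_arc_commute: "sph_arc a b = sph_arc b a"
proof -
  have *: "sph_arc a b \<subseteq> sph_arc b a" for a b
  proof
    fix x assume "x \<in> sph_arc a b"
    then obtain t where t: "t \<in> {0..1}"
      and x: "x = (1 / norm ((1 - t) *\<^sub>R a + t *\<^sub>R b)) *\<^sub>R ((1 - t) *\<^sub>R a + t *\<^sub>R b)"
      unfolding sph_arc_def by blast
    have e: "(1 - t) *\<^sub>R a + t *\<^sub>R b = (1 - (1 - t)) *\<^sub>R b + (1 - t) *\<^sub>R a" by simp
    have "1 - t \<in> {0..1}" using t by auto
    moreover have "x = (1 / norm ((1 - (1 - t)) *\<^sub>R b + (1 - t) *\<^sub>R a)) *\<^sub>R ((1 - (1 - t)) *\<^sub>R b + (1 - t) *\<^sub>R a)"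
      using x e by metis
    ultimately show "x \<in> sph_arc b a" unfolding sph_arc_def mem_Collect_eq by (rule bexI[rotated])
  qed
  show ?thesis using *[of a b] *[of b a] by blast
qed

text \<open>The sign hypotheses put x on the side of C of the plane A B and on the side of B of the plane
  A C. The second alternative says that the arc from A to x crosses the arc from C to E.\<close>

lemma cone_corner_cases:
  fixes A B C E x w :: "real^3"
  assumes D: "det3 A B C \<noteq> 0" and wB: "w = p *\<^sub>R A + q *\<^sub>R B" and wE: "w = r *\<^sub>R C + t *\<^sub>R E"
    and q: "q > 0" and r: "r \<ge> 0" and t: "t > 0"
    and h1: "det3 A B x * det3 A B C > 0" and h2: "det3 A x C * det3 A B C > 0"
  shows "in_cone3 A C w x \<or> (\<exists>l k1 k2. l > 0 \<and> k1 > 0 \<and> k2 > 0 \<and> l *\<^sub>R A + x = k1 *\<^sub>R C + k2 *\<^sub>R E)"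
proof -
  define \<alpha> where "\<alpha> = det3 x B C / det3 A B C"
  define \<beta> where "\<beta> = det3 A x C / det3 A B C"
  define \<gamma> where "\<gamma> = det3 A B x / det3 A B C"
  have xc: "x = \<alpha> *\<^sub>R A + \<beta> *\<^sub>R B + \<gamma> *\<^sub>R C"
    unfolding \<alpha>_def \<beta>_def \<gamma>_def by (rule det3_cramer[OF D])
  have bp: "\<beta> > 0" unfolding \<beta>_def using h2 by (simp add: zero_less_divide_iff zero_less_mult_iff)
  have gp: "\<gamma> > 0" unfolding \<gamma>_def using h1 by (simp add: zero_less_divide_iff zero_less_mult_iff)
  have B: "B = (1 / q) *\<^sub>R w - (p / q) *\<^sub>R A" using q unfolding wB
    by (simp add: scaleR_add_right divide_inverse)
  have x2: "x = (\<alpha> - \<beta> * p / q) *\<^sub>R A + (\<beta> / q) *\<^sub>R w + \<gamma> *\<^sub>R C"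
    unfolding xc B by (simp add: algebra_simps)
  show ?thesis
  proof (cases "\<alpha> - \<beta> * p / q \<ge> 0")
    case True
    have "x = (\<alpha> - \<beta> * p / q) *\<^sub>R A + \<gamma> *\<^sub>R C + (\<beta> / q) *\<^sub>R w" using x2 by (simp add: algebra_simps)
    then have "in_cone3 A C w x" using True bp gp q by (intro in_cone3I) auto
    then show ?thesis ..
  next
    case False
    have "(\<beta> * p / q - \<alpha>) *\<^sub>R A + x = (\<beta> / q) *\<^sub>R w + \<gamma> *\<^sub>R C" unfolding x2 by (simp add: algebra_simps)
    also have "\<dots> = (\<beta> * r / q + \<gamma>) *\<^sub>R C + (\<beta> * t / q) *\<^sub>R E" unfolding wE by (simp add: algebra_simps)
    finally have "(\<beta> * p / q - \<alpha>) *\<^sub>R A + x = (\<beta> * r / q + \<gamma>) *\<^sub>R C + (\<beta> * t / q) *\<^sub>R E" .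
    moreover have "\<beta> * p / q - \<alpha> > 0" "\<beta> * r / q + \<gamma> > 0" "\<beta> * t / q > 0"
      using False bp gp q r t by (auto intro: add_nonneg_pos divide_nonneg_pos)
    ultimately show ?thesis by blast
  qed
qed

text \<open>The arc from a point y0 inside side A B of the triangle A B w to a point c beyond that side
  but outside the triangle leaves the triangle through side A w or side B w.\<close>

lemma cone_path_exits_triangle:
  fixes A B c d w y0 :: "real^3"
  assumes c: "c = \<alpha> *\<^sub>R A + \<beta> *\<^sub>R B + \<gamma> *\<^sub>R w" and g: "\<gamma> > 0" and notT: "\<not> (\<alpha> \<ge> 0 \<and> \<beta> \<ge> 0)"
    and y0: "y0 = \<mu> *\<^sub>R A + \<nu> *\<^sub>R B" and mu: "\<mu> > 0" and nu: "\<nu> > 0"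
    and y0cd: "y0 = \<mu>' *\<^sub>R c + \<nu>' *\<^sub>R d" and mu': "\<mu>' \<ge> 0" and nu': "\<nu>' \<ge> 0"
  shows "\<exists>y. in_cone c d y \<and> ((\<exists>a g. a \<ge> 0 \<and> g > 0 \<and> y = a *\<^sub>R A + g *\<^sub>R w)
                              \<or> (\<exists>b g. b \<ge> 0 \<and> g > 0 \<and> y = b *\<^sub>R B + g *\<^sub>R w))"
proof (cases "\<alpha> < 0 \<and> \<mu> * \<beta> - \<alpha> * \<nu> \<ge> 0")
  case True
  define y where "y = (- \<alpha>) *\<^sub>R y0 + \<mu> *\<^sub>R c"
  have "y = (\<mu> * \<beta> - \<alpha> * \<nu>) *\<^sub>R B + (\<mu> * \<gamma>) *\<^sub>R w" unfolding y_def y0 c by (simp add: algebra_simps)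
  moreover have "y = (- \<alpha> * \<mu>' + \<mu>) *\<^sub>R c + (- \<alpha> * \<nu>') *\<^sub>R d" unfolding y_def y0cd by (simp add: algebra_simps)
  moreover have "- \<alpha> * \<mu>' + \<mu> \<ge> 0" "- \<alpha> * \<nu>' \<ge> 0"
    using True mu mu' nu' mult_nonneg_nonneg[of "-\<alpha>" \<mu>'] mult_nonneg_nonneg[of "-\<alpha>" \<nu>'] by auto
  ultimately show ?thesis using True mu g unfolding in_cone_def by (metis mult_pos_pos)
next
  case False
  have b: "\<beta> < 0" "\<nu> * \<alpha> - \<beta> * \<mu> \<ge> 0"
  proof -
    show "\<beta> < 0"
    proof (cases "\<alpha> < 0")
      case True
      then have "\<mu> * \<beta> < \<alpha> * \<nu>" using False by auto
      also have "\<alpha> * \<nu> < 0" using True nu by (simp add: mult_neg_pos)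
      finally show ?thesis using mu by (simp add: mult_less_0_iff)
    next
      case False then show ?thesis using notT by auto
    qed
    then show "\<nu> * \<alpha> - \<beta> * \<mu> \<ge> 0" using False mu nu
      by (cases "\<alpha> < 0") (auto simp: algebra_simps intro: mult_nonneg_nonneg,
          smt (verit) mult_neg_pos mult_nonneg_nonneg)
  qed
  define y where "y = (- \<beta>) *\<^sub>R y0 + \<nu> *\<^sub>R c"
  have "y = (\<nu> * \<alpha> - \<beta> * \<mu>) *\<^sub>R A + (\<nu> * \<gamma>) *\<^sub>R w" unfolding y_def y0 c by (simp add: algebra_simps)
  moreover have "y = (- \<beta> * \<mu>' + \<nu>) *\<^sub>R c + (- \<beta> * \<nu>') *\<^sub>R d" unfolding y_def y0cd by (simp add: algebra_simps)
  moreover have "- \<beta> * \<mu>' + \<nu> \<ge> 0" "- \<beta> * \<nu>' \<ge> 0"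
    using b nu mu' nu' mult_nonneg_nonneg[of "-\<beta>" \<mu>'] mult_nonneg_nonneg[of "-\<beta>" \<nu>'] by auto
  ultimately show ?thesis using b nu g unfolding in_cone_def by (metis mult_pos_pos)
qed

lemma cone_crossing_exits_triangle:
  fixes A B c d w y0 :: "real^3"
  assumes Dw: "det3 A B w \<noteq> 0" and cd: "in_cone c d y0" and AB: "in_cone A B y0" and y0: "y0 \<noteq> 0"
    and nzA: "det3 c d A \<noteq> 0" and nzB: "det3 c d B \<noteq> 0" and nzc: "det3 A B c \<noteq> 0" and nzd: "det3 A B d \<noteq> 0"
    and notc: "\<not> in_cone3 A B w c" and notd: "\<not> in_cone3 A B w d"
  shows "\<exists>y. in_cone c d y \<and> ((\<exists>a g. a \<ge> 0 \<and> g > 0 \<and> y = a *\<^sub>R A + g *\<^sub>R w)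
                              \<or> (\<exists>b g. b \<ge> 0 \<and> g > 0 \<and> y = b *\<^sub>R B + g *\<^sub>R w))"
proof -
  obtain \<mu> \<nu> where m: "\<mu> \<ge> 0" "\<nu> \<ge> 0" "y0 = \<mu> *\<^sub>R A + \<nu> *\<^sub>R B" using AB unfolding in_cone_def by blast
  obtain \<mu>' \<nu>' where m': "\<mu>' \<ge> 0" "\<nu>' \<ge> 0" "y0 = \<mu>' *\<^sub>R c + \<nu>' *\<^sub>R d" using cd unfolding in_cone_def by blast
  have d0: "det3 c d y0 = 0" unfolding m'(3) by (simp add: det3_simps)
  have d1: "det3 A B y0 = 0" unfolding m(3) by (simp add: det3_simps)
  have mp: "\<mu> > 0"
  proof (rule ccontr)
    assume "\<not> \<mu> > 0" then have "\<mu> = 0" using m by simp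
    then have "\<nu> * det3 c d B = 0" using d0 unfolding m(3) by (simp add: det3_simps)
    then show False using nzB \<open>\<mu> = 0\<close> m y0 by simp
  qed
  have np: "\<nu> > 0"
  proof (rule ccontr)
    assume "\<not> \<nu> > 0" then have "\<nu> = 0" using m by simp
    then have "\<mu> * det3 c d A = 0" using d0 unfolding m(3) by (simp add: det3_simps)
    then show False using nzA \<open>\<nu> = 0\<close> m y0 by simp
  qed
  have coord: "z = (det3 z B w / det3 A B w) *\<^sub>R A + (det3 A z w / det3 A B w) *\<^sub>R B
                   + (det3 A B z / det3 A B w) *\<^sub>R w" for z
    by (rule det3_cramer[OF Dw])
  have outside: "\<not> (det3 z B w / det3 A B w \<ge> 0 \<and> det3 A z w / det3 A B w \<ge> 0)"
    if "det3 A B z / det3 A B w > 0" "\<not> in_cone3 A B w z" for z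
    using that coord[of z] unfolding in_cone3_def by (metis less_eq_real_def)
  have lin: "\<mu>' * (det3 A B c / det3 A B w) + \<nu>' * (det3 A B d / det3 A B w) = 0"
    using d1 unfolding m'(3) by (simp add: det3_simps add_divide_distrib[symmetric])
  show ?thesis
  proof (cases "det3 A B c / det3 A B w > 0")
    case True
    show ?thesis
      by (rule cone_path_exits_triangle[OF coord[of c] True outside[OF True notc] m(3) mp np m'(3) m'(1,2)])
  next
    case False
    then have cneg: "det3 A B c / det3 A B w < 0" using nzc Dw by (simp add: less_le)
    have "\<mu>' > 0"
    proof (rule ccontr)
      assume "\<not> \<mu>' > 0" then have "\<mu>' = 0" using m' by simp
      then have "\<nu>' * det3 A B d = 0" using d1 unfolding m'(3) by (simp add: det3_simps)
      then show False using nzd \<open>\<mu>' = 0\<close> m' y0 by simp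
    qed
    then have "\<mu>' * (det3 A B c / det3 A B w) < 0" using cneg mult_pos_neg by blast
    then have "\<nu>' * (det3 A B d / det3 A B w) > 0" using lin by linarith
    then have dpos: "det3 A B d / det3 A B w > 0"
      using m'(2) zero_less_mult_iff[of \<nu>' "det3 A B d / det3 A B w"] by linarith
    have y0': "y0 = \<nu>' *\<^sub>R d + \<mu>' *\<^sub>R c" using m'(3) by (simp add: add.commute)
    from cone_path_exits_triangle[OF coord[of d] dpos outside[OF dpos notd] m(3) mp np y0' m'(2,1)]
    show ?thesis using in_cone_commute by blast
  qed
qed

lemma Suc_mod_eq_if: "k < n \<Longrightarrow> Suc k mod n = (if Suc k = n then 0 else Suc k)"
  by (simp add: mod_Suc)

lemma edge_eq_sph_arc: "k < n \<Longrightarrow> edge n u k = sph_arc (u k) (u (Suc k mod n))"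
  unfolding edge_def vtx_def by simp

lemma sph_polygon_det_nonzero:
  "sph_polygon n u \<Longrightarrow> a < n \<Longrightarrow> b < n \<Longrightarrow> c < n \<Longrightarrow> a \<noteq> b \<Longrightarrow> b \<noteq> c \<Longrightarrow> a \<noteq> c
    \<Longrightarrow> det3 (u a) (u b) (u c) \<noteq> 0"
  unfolding sph_polygon_def by blast

lemma sph_polygon_reindex:
  assumes "sph_polygon n u" and v: "\<And>k. k < n \<Longrightarrow> v k = u (\<pi> k)"
    and range: "\<And>k. k < n \<Longrightarrow> \<pi> k < n" and inj: "inj_on \<pi> {..<n}"
  shows "sph_polygon n v"
  unfolding sph_polygon_def
proof (intro conjI allI impI)
  show "3 \<le> n" using assms(1) unfolding sph_polygon_def by blast
next
  fix k assume "k < n"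
  then show "norm (v k) = 1" using assms(1) v range unfolding sph_polygon_def by simp
next
  fix a b c assume abc: "a < n" "b < n" "c < n" "a \<noteq> b \<and> b \<noteq> c \<and> a \<noteq> c"
  then have "\<pi> a \<noteq> \<pi> b" "\<pi> b \<noteq> \<pi> c" "\<pi> a \<noteq> \<pi> c" using inj by (auto dest: inj_onD)
  then show "det3 (v a) (v b) (v c) \<noteq> 0"
    using assms(1) abc v range unfolding sph_polygon_def by simp
qed

subsection \<open>Turning signs and inflections\<close>

definition turn :: "nat \<Rightarrow> (nat \<Rightarrow> real^3) \<Rightarrow> nat \<Rightarrow> real" where
  "turn n u k = det3 (vtx n u (k + n - 1)) (vtx n u k) (vtx n u (Suc k))"

lemma is_inflection_iff_turn: "0 < n \<Longrightarrow> is_inflection n u k \<longleftrightarrow> turn n u k * turn n u (Suc k) < 0"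
proof -
  assume "0 < n"
  then have "vtx n u (Suc k + n - 1) = vtx n u k" unfolding vtx_def by simp
  then show ?thesis unfolding is_inflection_def turn_def by (simp add: numeral_2_eq_2)
qed

lemma turn_eq:
  "k < n \<Longrightarrow> turn n u k = det3 (u (if k = 0 then n - 1 else k - 1)) (u k) (u (Suc k mod n))"
proof -
  assume k: "k < n"
  have "(k + n - 1) mod n = (if k = 0 then n - 1 else k - 1)"
  proof (cases "k = 0")
    case False
    then have "k + n - 1 = (k - 1) + n" by simp
    then have "(k + n - 1) mod n = (k - 1) mod n" by simp
    then show ?thesis using k False by simp
  qed (use k in simp)
  then show ?thesis unfolding turn_def vtx_def using k by simp
qed

lemma turn_mod: "0 < n \<Longrightarrow> turn n u (k mod n) = turn n u k"
proof -
  assume n: "0 < n"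
  have "k mod n + n - 1 = k mod n + (n - 1)" "k + n - 1 = k + (n - 1)" using n by auto
  then have "(k mod n + n - 1) mod n = (k + n - 1) mod n" by (simp add: mod_add_left_eq)
  then show ?thesis unfolding turn_def vtx_def by (simp add: mod_Suc_eq)
qed

lemma turn_nonzero:
  assumes "sph_polygon n u" shows "turn n u k \<noteq> 0"
proof -
  have n: "3 \<le> n" using assms unfolding sph_polygon_def by blast
  obtain m where m: "m < n" "k mod n = m" using n by (metis mod_less_divisor not_numeral_le_zero neq0_conv)
  have "det3 (u (if m = 0 then n - 1 else m - 1)) (u m) (u (Suc m mod n)) \<noteq> 0"
    by (rule sph_polygon_det_nonzero[OF assms]) (use n m(1) in \<open>auto simp: mod_Suc\<close>)
  then show ?thesis using turn_eq[OF m(1), of u] turn_mod[of n u k] m n by simp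
qed

definition sign_changes :: "(nat \<Rightarrow> bool) \<Rightarrow> nat \<Rightarrow> nat \<Rightarrow> nat" where
  "sign_changes b m m' = (\<Sum>k = m..<m'. of_bool (b k \<noteq> b (Suc k)))"

lemma sign_changes_concat:
  "m \<le> l \<Longrightarrow> l \<le> m' \<Longrightarrow> sign_changes b m l + sign_changes b l m' = sign_changes b m m'"
  unfolding sign_changes_def by (rule sum.atLeastLessThan_concat)

lemma sign_changes_Suc: "sign_changes b m (Suc m) = of_bool (b m \<noteq> b (Suc m))"
  unfolding sign_changes_def by simp

lemma sign_changes_reflect: "sign_changes (\<lambda>k. \<not> b (m + m' - k)) m m' = sign_changes b m m'"
  unfolding sign_changes_def
  by (subst sum.atLeastLessThan_rev, rule sum.cong[OF refl]) (auto simp: Suc_diff_Suc)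

lemma sign_changes_update_first:
  assumes "m < m'" shows "sign_changes (b(m := x)) m m' \<le> sign_changes b m m' + of_bool (x \<noteq> b m)"
proof -
  have rest: "sign_changes (b(m := x)) (Suc m) m' = sign_changes b (Suc m) m'"
    unfolding sign_changes_def by (rule sum.cong) auto
  have "sign_changes v m m' = of_bool (v m \<noteq> v (Suc m)) + sign_changes v (Suc m) m'" for v
    using sign_changes_concat[of m "Suc m" m' v] assms by (simp add: sign_changes_Suc)
  from this[of "b(m := x)"] this[of b] show ?thesis unfolding rest by auto
qed

lemma sign_changes_update_last:
  assumes "m < m'" shows "sign_changes (b(m' := y)) m m' \<le> sign_changes b m m' + of_bool (y \<noteq> b m')"
proof -
  obtain p where p: "m' = Suc p" "m \<le> p" using assms by (cases m') auto
  have rest: "sign_changes (b(m' := y)) m p = sign_changes b m p"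
    unfolding sign_changes_def p by (rule sum.cong) auto
  have "sign_changes v m m' = sign_changes v m p + of_bool (v p \<noteq> v m')" for v
    using sign_changes_concat[of m p m' v] p by (simp add: sign_changes_Suc)
  from this[of "b(m' := y)"] this[of b] show ?thesis unfolding rest using p by auto
qed

lemma sign_changes_update_ends:
  assumes "m < m'" and same: "\<And>k. m < k \<Longrightarrow> k < m' \<Longrightarrow> b' k = b k"
  shows "sign_changes b' m m' \<le> sign_changes b m m' + of_bool (b' m \<noteq> b m) + of_bool (b' m' \<noteq> b m')"
proof -
  have "sign_changes b' m m' = sign_changes (b(m := b' m, m' := b' m')) m m'"
    unfolding sign_changes_def using same by (intro sum.cong refl arg_cong[where f = of_bool]) auto
  also have "\<dots> \<le> sign_changes (b(m := b' m)) m m' + of_bool (b' m' \<noteq> b m')"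
    using sign_changes_update_last[OF assms(1), of "b(m := b' m)"] assms(1) by simp
  also have "\<dots> \<le> sign_changes b m m' + of_bool (b' m \<noteq> b m) + of_bool (b' m' \<noteq> b m')"
    using sign_changes_update_first[OF assms(1)] by simp
  finally show ?thesis .
qed

lemma mult_neg_iff_signs_differ:
  fixes x y s :: real
  assumes "x \<noteq> 0" "y \<noteq> 0" "s \<noteq> 0"
  shows "x * y < 0 \<longleftrightarrow> (0 < s * x) \<noteq> (0 < s * y)"
  using assms by (cases "0 < s"; cases "0 < x"; cases "0 < y") (auto simp: mult_less_0_iff zero_less_mult_iff)

lemma card_Collect_less_eq_sum: "card {k. k < (n::nat) \<and> P k} = (\<Sum>k<n. of_bool (P k) :: nat)"
proof -
  have "{k. k < n \<and> P k} = {..<n} \<inter> {k. P k}" by auto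
  moreover have "(\<Sum>k<n. of_bool (P k) :: nat) = of_nat (card ({..<n} \<inter> {k. P k}))"
    by (rule sum_of_bool_eq) simp_all
  ultimately show ?thesis by simp
qed

lemma num_inflections_eq_sign_changes:
  assumes "sph_polygon n u" "\<sigma> \<noteq> 0"
  shows "num_inflections n u = sign_changes (\<lambda>k. 0 < \<sigma> * turn n u k) 0 n"
proof -
  have n: "0 < n" using assms(1) unfolding sph_polygon_def by simp
  have "is_inflection n u k \<longleftrightarrow> (0 < \<sigma> * turn n u k) \<noteq> (0 < \<sigma> * turn n u (Suc k))" for k
    unfolding is_inflection_iff_turn[OF n]
    by (rule mult_neg_iff_signs_differ[OF turn_nonzero[OF assms(1)] turn_nonzero[OF assms(1)] assms(2)])
  then show ?thesis
    unfolding num_inflections_def card_Collect_less_eq_sum sign_changes_def atLeast0LessThan by simp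
qed

text \<open>S0, S1, Sj, Sj1 are the turning signs of the old polygon at the endpoints of the two removed
  edges, A, B, C, D those of the new polygon at the same positions, and the hypotheses are the
  constraints coming from the two empty triangles.\<close>

lemma switch_sign_changes_bound:
  fixes S0 S1 Sj Sj1 A B C D :: bool
  assumes "S0 \<longrightarrow> A" "Sj \<or> B" "S1 \<or> C" "Sj1 \<longrightarrow> D"
  shows "of_bool (A \<noteq> S0) + of_bool (A \<noteq> B) + of_bool (B = Sj) + of_bool (C = S1) + of_bool (C \<noteq> D)
           + of_bool (D \<noteq> Sj1)
         \<le> of_bool (S0 \<noteq> S1) + of_bool (Sj \<noteq> Sj1) + (2::nat)"
  using assms by (cases S0; cases S1; cases Sj; cases Sj1; cases A; cases B; cases C; cases D) simp_all

subsection \<open>Rotating the vertex labels\<close>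

definition rotate_polygon :: "nat \<Rightarrow> nat \<Rightarrow> (nat \<Rightarrow> real^3) \<Rightarrow> nat \<Rightarrow> real^3" where
  "rotate_polygon n i u k = u ((k + i) mod n)"

lemma rotate_index_inj:
  fixes a b i n :: nat
  assumes "a < n" "b < n" "(a + i) mod n = (b + i) mod n" shows "a = b"
proof -
  have "(a + i mod n) mod n = (b + i mod n) mod n" using assms(3) by (simp add: mod_add_right_eq)
  moreover have "i mod n < n" using assms(1) by simp
  ultimately show ?thesis
    using assms(1,2) by (cases "a + i mod n < n"; cases "b + i mod n < n") (simp_all add: le_mod_geq)
qed

lemma bij_betw_rotate_index:
  fixes n i :: nat
  assumes "0 < n" shows "bij_betw (\<lambda>k. (k + i) mod n) {..<n} {..<n}"
proof -
  have inj: "inj_on (\<lambda>k. (k + i) mod n) {..<n}"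
  proof (rule inj_onI)
    fix x y assume "x \<in> {..<n}" "y \<in> {..<n}" "(x + i) mod n = (y + i) mod n"
    then show "x = y" using rotate_index_inj[of x n y i] by simp
  qed
  moreover have "(\<lambda>k. (k + i) mod n) ` {..<n} \<subseteq> {..<n}" using assms by auto
  ultimately have "(\<lambda>k. (k + i) mod n) ` {..<n} = {..<n}" by (simp add: endo_inj_surj)
  with inj show ?thesis unfolding bij_betw_def by blast
qed

lemma vtx_rotate_polygon: "vtx n (rotate_polygon n i u) k = vtx n u (k + i)"
  unfolding vtx_def rotate_polygon_def by (simp add: mod_add_left_eq)

lemma edge_rotate_polygon: "edge n (rotate_polygon n i u) k = edge n u ((k + i) mod n)"
  unfolding edge_def vtx_rotate_polygon unfolding vtx_def by (simp add: mod_add_left_eq mod_Suc_eq)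

lemma sph_polygon_rotate_polygon:
  assumes "sph_polygon n u" shows "sph_polygon n (rotate_polygon n i u)"
proof -
  have "0 < n" using assms unfolding sph_polygon_def by simp
  then show ?thesis using bij_betw_rotate_index[of n i] unfolding bij_betw_def
    by (intro sph_polygon_reindex[OF assms, where \<pi> = "\<lambda>k. (k + i) mod n"])
       (auto simp: rotate_polygon_def)
qed

lemma vtx_cong: "a mod n = b mod n \<Longrightarrow> vtx n u a = vtx n u b"
  unfolding vtx_def by simp

lemma is_inflection_rotate_polygon:
  assumes n: "0 < n"
  shows "is_inflection n (rotate_polygon n i u) k = is_inflection n u ((k + i) mod n)"
proof -
  have shift: "(k + l + i) mod n = ((k + i) mod n + l) mod n" for l
    using mod_add_left_eq[of "k + i" n l] by (simp add: add_ac)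
  have "vtx n u (k + n - 1 + i) = vtx n u ((k + i) mod n + n - 1)"
  proof (rule vtx_cong)
    have "k + n - 1 = k + (n - 1)" "(k + i) mod n + n - 1 = (k + i) mod n + (n - 1)" using n by auto
    then show "(k + n - 1 + i) mod n = ((k + i) mod n + n - 1) mod n" using shift[of "n - 1"] by simp
  qed
  moreover have "vtx n u (k + i) = vtx n u ((k + i) mod n)" by (rule vtx_cong) simp
  moreover have "vtx n u (k + l + i) = vtx n u ((k + i) mod n + l)" for l by (rule vtx_cong) (rule shift)
  ultimately show ?thesis unfolding is_inflection_def vtx_rotate_polygon by (simp only:)
qed

lemma num_inflections_rotate_polygon:
  assumes "0 < n" shows "num_inflections n (rotate_polygon n i u) = num_inflections n u"
proof -
  have "num_inflections n (rotate_polygon n i u) = (\<Sum>k<n. of_bool (is_inflection n u ((k + i) mod n)))"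
    unfolding num_inflections_def card_Collect_less_eq_sum is_inflection_rotate_polygon[OF assms] ..
  also have "\<dots> = (\<Sum>k<n. of_bool (is_inflection n u k))"
    by (rule sum.reindex_bij_betw[OF bij_betw_rotate_index[OF assms]])
  finally show ?thesis unfolding num_inflections_def card_Collect_less_eq_sum .
qed

lemma adjacent_edges_rotate:
  assumes "k < n" "l < n"
  shows "adjacent_edges n ((k + i) mod n) ((l + i) mod n) \<longleftrightarrow> adjacent_edges n k l"
proof -
  have succ: "Suc ((x + i) mod n) mod n = (Suc x mod n + i) mod n" for x
    by (simp add: mod_Suc_eq mod_add_left_eq)
  have n: "0 < n" using assms by simp
  have eq: "(x + i) mod n = (y + i) mod n \<longleftrightarrow> x = y" if "x < n" "y < n" for x y
    using that rotate_index_inj by blast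
  show ?thesis
    unfolding adjacent_edges_def succ using eq[OF assms] eq[OF _ assms(2), of "Suc k mod n"]
      eq[OF _ assms(1), of "Suc l mod n"] n by auto
qed

lemma two_opt_rotate_polygon:
  assumes i: "i < n" and j: "j < n"
  shows "two_opt n u i j = two_opt n (rotate_polygon n i u) 0 ((j + n - i) mod n)"
proof
  fix k
  define j' where "j' = (j + n - i) mod n"
  have j'v: "j' = (if i \<le> j then j - i else j + n - i)"
  proof (cases "i \<le> j")
    case True
    then obtain d where "j = i + d" using le_Suc_ex by blast
    then show ?thesis unfolding j'_def using j by simp
  qed (use i j'_def in simp)
  have j'l: "j' < n" using j'v i j by auto
  have mv: "(j' + n - 0) mod n = j'" using j'l by simp
  have mid: "(j + n + 1 - k) mod n = ((j' + n + 1 - k) mod n + i) mod n" if "k \<noteq> 0" "k \<le> j'"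
  proof (cases "i \<le> j")
    case True
    then have "j' + n + 1 - k + i = j + n + 1 - k" using that j'v by simp
    then show ?thesis by (simp add: mod_add_left_eq)
  next
    case False
    then have "j' + n + 1 - k + i = (j + n + 1 - k) + n" using that j'v i by simp
    then show ?thesis by (simp add: mod_add_left_eq)
  qed
  have high: "(j + k - j') mod n = ((j' + k - j') mod n + i) mod n" if "\<not> k \<le> j'"
  proof (cases "i \<le> j")
    case True
    then have "j + k - j' = k + i" using that j'v by simp
    then show ?thesis by (simp add: mod_add_left_eq)
  next
    case False
    then have "k + i = (j + k - j') + n" using that j'v i by simp
    then show ?thesis by (simp add: mod_add_left_eq)
  qed
  show "two_opt n u i j k = two_opt n (rotate_polygon n i u) 0 ((j + n - i) mod n) k"
    unfolding two_opt_def Let_def rotate_polygon_def j'_def[symmetric] mv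
    using mid high i by (auto simp: rotate_polygon_def)
qed

locale unique_crossing =
  fixes n j :: nat and u :: "nat \<Rightarrow> real^3" and w :: "real^3"
  assumes polygon: "sph_polygon n u" and j_ge: "2 \<le> j" and j_le: "j + 2 \<le> n"
    and crossing_pair: "\<And>k l. k < n \<Longrightarrow> l < n \<Longrightarrow> \<not> adjacent_edges n k l \<Longrightarrow>
           edge n u k \<inter> edge n u l \<noteq> {} \<Longrightarrow> {k, l} = {0, j}"
    and crossing: "edge n u 0 \<inter> edge n u j = {w}"
    and triangle_0j: "\<And>k. k < n \<Longrightarrow> k \<noteq> 0 \<Longrightarrow> k \<noteq> j \<Longrightarrow> u k \<notin> sph_triangle (u 0) (u j) w"
    and triangle_1Sj: "\<And>k. k < n \<Longrightarrow> k \<noteq> 1 \<Longrightarrow> k \<noteq> Suc j \<Longrightarrow>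
           u k \<notin> sph_triangle (u 1) (u (Suc j)) w"
begin

abbreviation \<sigma> :: real where "\<sigma> \<equiv> det3 (u 0) (u 1) (u j)"

lemma n_ge_4: "4 \<le> n"
  using j_ge j_le by simp

lemma det_nonzero:
  "a < n \<Longrightarrow> b < n \<Longrightarrow> c < n \<Longrightarrow> a \<noteq> b \<Longrightarrow> b \<noteq> c \<Longrightarrow> a \<noteq> c \<Longrightarrow> det3 (u a) (u b) (u c) \<noteq> 0"
  by (rule sph_polygon_det_nonzero[OF polygon])

lemma \<sigma>_nonzero: "\<sigma> \<noteq> 0"
  using det_nonzero[of 0 1 j] j_ge j_le by simp

lemma outside_triangle_0j: "k < n \<Longrightarrow> k \<noteq> 0 \<Longrightarrow> k \<noteq> j \<Longrightarrow> \<not> in_cone3 (u 0) (u j) w (u k)"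
  using triangle_0j polygon unfolding sph_triangle_iff sph_polygon_def by blast

lemma outside_triangle_1Sj:
  "k < n \<Longrightarrow> k \<noteq> 1 \<Longrightarrow> k \<noteq> Suc j \<Longrightarrow> \<not> in_cone3 (u 1) (u (Suc j)) w (u k)"
  using triangle_1Sj polygon unfolding sph_triangle_iff sph_polygon_def by blast

lemma independent_pair:
  assumes "x < n" "z < n" "x \<noteq> z" "a *\<^sub>R u x + b *\<^sub>R u z = 0"
  shows "a = 0 \<and> b = 0"
proof -
  define g where "g = (if x \<noteq> 0 \<and> z \<noteq> 0 then 0 else if x \<noteq> 1 \<and> z \<noteq> 1 then 1 else (2::nat))"
  have g: "g < n" "g \<noteq> x" "g \<noteq> z" unfolding g_def using n_ge_4 assms(3) by auto
  have "det3 (u x) (u z) (u g) \<noteq> 0" using det_nonzero assms g by auto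
  moreover have "a *\<^sub>R u x + b *\<^sub>R u z + 0 *\<^sub>R u g = 0" using assms by simp
  ultimately show ?thesis using det3_nonzero_independent by blast
qed

lemma positive_combination_not_vertex:
  assumes xz: "x < n" "z < n" "x \<noteq> z" and a: "a1 > 0" "a2 > 0" and m: "m < n"
  shows "a1 *\<^sub>R u x + a2 *\<^sub>R u z \<noteq> c *\<^sub>R u m"
proof
  assume eq: "a1 *\<^sub>R u x + a2 *\<^sub>R u z = c *\<^sub>R u m"
  consider "m = x" | "m = z" | "m \<noteq> x \<and> m \<noteq> z" by blast
  then show False
  proof cases
    case 1
    then have "(a1 - c) *\<^sub>R u x + a2 *\<^sub>R u z = 0" using eq by (simp add: algebra_simps)
    then show False using independent_pair[OF xz] a by auto
  next
    case 2
    then have "a1 *\<^sub>R u x + (a2 - c) *\<^sub>R u z = 0" using eq by (simp add: algebra_simps)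
    then show False using independent_pair[OF xz] a by auto
  next
    case 3
    then have "det3 (u x) (u z) (u m) \<noteq> 0" using det_nonzero xz m by auto
    moreover have "a1 *\<^sub>R u x + a2 *\<^sub>R u z + (- c) *\<^sub>R u m = 0" using eq by simp
    ultimately show False using det3_nonzero_independent a by blast
  qed
qed

text \<open>Two adjacent edges share only a vertex, so a common non-vertex point of the cones over two
  distinct edges can only come from the crossing pair.\<close>

lemma shared_cone_point_crossing:
  assumes kl: "k < n" "l < n" "k \<noteq> l" and y: "y \<noteq> 0"
    and ck: "in_cone (u k) (u (Suc k mod n)) y" and cl: "in_cone (u l) (u (Suc l mod n)) y"
    and not_vertex: "\<And>m c. m < n \<Longrightarrow> y \<noteq> c *\<^sub>R u m"
  shows "{k, l} = {0, j}"
proof (cases "adjacent_edges n k l")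
  case False
  have "(1 / norm y) *\<^sub>R y \<in> edge n u k \<inter> edge n u l"
    using normalize_in_sph_arc[OF ck y] normalize_in_sph_arc[OF cl y] edge_eq_sph_arc kl by auto
  then have "edge n u k \<inter> edge n u l \<noteq> {}" by blast
  then show ?thesis by (rule crossing_pair[OF kl(1,2) False])
next
  case True
  have consecutive: False
    if a: "a < n" "in_cone (u a) (u (Suc a mod n)) y"
      "in_cone (u (Suc a mod n)) (u (Suc (Suc a mod n) mod n)) y" for a
  proof -
    let ?b = "Suc a mod n" and ?c = "Suc (Suc a mod n) mod n"
    obtain \<mu> \<nu> where m: "y = \<mu> *\<^sub>R u a + \<nu> *\<^sub>R u ?b" using a(2) unfolding in_cone_def by blast
    obtain \<mu>' \<nu>' where m': "y = \<mu>' *\<^sub>R u ?b + \<nu>' *\<^sub>R u ?c" using a(3) unfolding in_cone_def by blast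
    have b: "?b < n" "?c < n" "a \<noteq> ?b" "?b \<noteq> ?c" "a \<noteq> ?c" using a(1) n_ge_4 by (auto simp: mod_Suc)
    then have "det3 (u a) (u ?b) (u ?c) \<noteq> 0" using det_nonzero a(1) by blast
    moreover have "\<mu> *\<^sub>R u a + (\<nu> - \<mu>') *\<^sub>R u ?b + (- \<nu>') *\<^sub>R u ?c = 0"
      using m m' by (simp add: algebra_simps)
    ultimately have "\<mu> = 0" using det3_nonzero_independent by blast
    then show False using m not_vertex[of ?b \<nu>] b(1) by simp
  qed
  from True consider "Suc k mod n = l" | "Suc l mod n = k"
    using kl(3) unfolding adjacent_edges_def by blast
  then show ?thesis using consecutive[of k] consecutive[of l] kl ck cl by cases auto
qed

lemma no_further_crossing:
  assumes f: "f < n" "f \<noteq> 0" "f \<noteq> j"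
    and gg': "(g = 0 \<and> g' = 1) \<or> (g = 1 \<and> g' = 0) \<or> (g = j \<and> g' = Suc j) \<or> (g = Suc j \<and> g' = j)"
    and pos: "a > 0" "b > 0"
    and cone: "in_cone (u f) (u (Suc f mod n)) (a *\<^sub>R u g + b *\<^sub>R u g')"
  shows False
proof -
  let ?y = "a *\<^sub>R u g + b *\<^sub>R u g'"
  have g: "g < n" "g' < n" "g \<noteq> g'" using gg' j_le by auto
  have not_vertex: "\<And>m c. m < n \<Longrightarrow> ?y \<noteq> c *\<^sub>R u m"
    using positive_combination_not_vertex[OF g pos] by blast
  have "?y \<noteq> 0" using not_vertex[of 0 0] n_ge_4 by simp
  have succ: "Suc 0 mod n = 1" "Suc j mod n = Suc j" using j_le by auto
  have "in_cone (u 0) (u (Suc 0 mod n)) ?y \<or> in_cone (u j) (u (Suc j mod n)) ?y"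
    unfolding succ using gg' pos
    by (elim disjE conjE) (auto intro: in_coneI[of a b] in_coneI[of b a] simp: add.commute)
  then obtain h where h: "h = 0 \<or> h = j" "in_cone (u h) (u (Suc h mod n)) ?y" by blast
  then have "h < n" "f \<noteq> h" using f j_le by auto
  then have "{f, h} = {0, j}"
    by (intro shared_cone_point_crossing[OF f(1) _ _ \<open>?y \<noteq> 0\<close> cone h(2) not_vertex])
  then show False using f by (auto simp: doubleton_eq_iff)
qed

lemma corner_excluded:
  assumes idx: "a < n" "b < n" "c < n" "x < n" and D: "det3 (u a) (u b) (u c) \<noteq> 0"
    and wa: "w = pa *\<^sub>R u a + pb *\<^sub>R u b" "pb > 0"
    and wc: "w = rc *\<^sub>R u c + re *\<^sub>R u e" "rc > 0" "re > 0"
    and outside: "\<not> in_cone3 (u a) (u c) w (u x)"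
    and f: "f < n" "f \<noteq> 0" "f \<noteq> j" "(f = x \<and> Suc f mod n = a) \<or> (f = a \<and> Suc f mod n = x)"
    and ce: "(c = 0 \<and> e = 1) \<or> (c = 1 \<and> e = 0) \<or> (c = j \<and> e = Suc j) \<or> (c = Suc j \<and> e = j)"
  shows "\<not> (0 < det3 (u a) (u b) (u x) * det3 (u a) (u b) (u c) \<and>
             0 < det3 (u a) (u x) (u c) * det3 (u a) (u b) (u c))"
proof
  assume "0 < det3 (u a) (u b) (u x) * det3 (u a) (u b) (u c) \<and>
          0 < det3 (u a) (u x) (u c) * det3 (u a) (u b) (u c)"
  then have "in_cone3 (u a) (u c) w (u x) \<or>
      (\<exists>l k1 k2. l > 0 \<and> k1 > 0 \<and> k2 > 0 \<and> l *\<^sub>R u a + u x = k1 *\<^sub>R u c + k2 *\<^sub>R u e)"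
    using cone_corner_cases[OF D wa(1) wc(1) wa(2) less_imp_le[OF wc(2)] wc(3)] by blast
  then obtain l k1 k2 where pos: "l > 0" "k1 > 0" "k2 > 0"
    and eq: "l *\<^sub>R u a + u x = k1 *\<^sub>R u c + k2 *\<^sub>R u e"
    using outside by blast
  from f(4) have "in_cone (u f) (u (Suc f mod n)) (k1 *\<^sub>R u c + k2 *\<^sub>R u e)"
  proof (elim disjE conjE)
    assume "f = x" "Suc f mod n = a"
    then show ?thesis using pos eq by (intro in_coneI[of 1 l]) (auto simp: add.commute)
  next
    assume "f = a" "Suc f mod n = x"
    then show ?thesis using pos eq by (intro in_coneI[of l 1]) auto
  qed
  then show False using no_further_crossing[OF f(1-3) ce pos(2,3)] by blast
qed

text \<open>An edge meeting the diagonal from u a to u c enters the empty triangle u a, u c, w and must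
  leave it through one of the crossing edges, producing a second crossing.\<close>

lemma diagonal_avoids_edge:
  assumes ac: "a < n" "c < n" and f: "f < n" "f \<noteq> 0" "f \<noteq> j"
    and ends: "a \<noteq> f" "a \<noteq> Suc f mod n" "c \<noteq> f" "c \<noteq> Suc f mod n"
    and ab: "(a = 0 \<and> b = 1) \<or> (a = 1 \<and> b = 0)" and ce: "(c = j \<and> e = Suc j) \<or> (c = Suc j \<and> e = j)"
    and wa: "w = pa *\<^sub>R u a + pb *\<^sub>R u b" "pa > 0" "pb > 0"
    and wc: "w = rc *\<^sub>R u c + re *\<^sub>R u e" "rc > 0" "re > 0"
    and outside: "\<And>k. k < n \<Longrightarrow> k \<noteq> a \<Longrightarrow> k \<noteq> c \<Longrightarrow> \<not> in_cone3 (u a) (u c) w (u k)"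
  shows "sph_arc (u a) (u c) \<inter> edge n u f = {}"
proof (rule ccontr)
  let ?f = "Suc f mod n"
  have f': "?f < n" "?f \<noteq> f" using f n_ge_4 by (auto simp: mod_Suc)
  have b: "b < n" "b \<noteq> a" "b \<noteq> c" and "a \<noteq> c" using ab ce j_ge j_le by auto
  assume "sph_arc (u a) (u c) \<inter> edge n u f \<noteq> {}"
  then obtain x where x: "x \<in> sph_arc (u a) (u c)" "x \<in> sph_arc (u f) (u ?f)"
    using edge_eq_sph_arc[OF f(1)] by blast
  have "det3 (u a) (u c) (u b) \<noteq> 0" using det_nonzero ac b \<open>a \<noteq> c\<close> by auto
  then have AB: "in_cone (u a) (u c) x" and "x \<noteq> 0" using sph_arc_in_cone x(1) by blast+
  have "det3 (u f) (u ?f) (u a) \<noteq> 0" using det_nonzero f(1) f' ac ends by auto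
  then have cd: "in_cone (u f) (u ?f) x" using sph_arc_in_cone x(2) by blast
  have "det3 (u a) (u c) w = pb * det3 (u a) (u c) (u b)" unfolding wa(1) by (simp add: det3_simps)
  then have Dw: "det3 (u a) (u c) w \<noteq> 0" using \<open>det3 (u a) (u c) (u b) \<noteq> 0\<close> wa(3) by simp
  have nz: "det3 (u f) (u ?f) (u a) \<noteq> 0" "det3 (u f) (u ?f) (u c) \<noteq> 0"
    "det3 (u a) (u c) (u f) \<noteq> 0" "det3 (u a) (u c) (u ?f) \<noteq> 0"
    using det_nonzero f(1) f' ac ends \<open>a \<noteq> c\<close> by auto
  obtain y where y: "in_cone (u f) (u ?f) y"
    and exits: "(\<exists>\<alpha> g. \<alpha> \<ge> 0 \<and> g > 0 \<and> y = \<alpha> *\<^sub>R u a + g *\<^sub>R w)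
              \<or> (\<exists>\<beta> g. \<beta> \<ge> 0 \<and> g > 0 \<and> y = \<beta> *\<^sub>R u c + g *\<^sub>R w)"
    using cone_crossing_exits_triangle[OF Dw cd AB \<open>x \<noteq> 0\<close> nz outside[OF f(1)] outside[OF f'(1)]]
      ends by blast
  from exits show False
  proof (elim disjE exE conjE)
    fix \<alpha> g assume "\<alpha> \<ge> 0" "g > 0" and y_eq: "y = \<alpha> *\<^sub>R u a + g *\<^sub>R w"
    then have "\<alpha> + g * pa > 0" "g * pb > 0" using wa by (auto intro: add_nonneg_pos)
    moreover have "y = (\<alpha> + g * pa) *\<^sub>R u a + (g * pb) *\<^sub>R u b"
      unfolding y_eq wa(1) by (simp add: algebra_simps)
    ultimately show False using no_further_crossing[OF f, of a b] ab y by auto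
  next
    fix \<beta> g assume "\<beta> \<ge> 0" "g > 0" and y_eq: "y = \<beta> *\<^sub>R u c + g *\<^sub>R w"
    then have "\<beta> + g * rc > 0" "g * re > 0" using wc by (auto intro: add_nonneg_pos)
    moreover have "y = (\<beta> + g * rc) *\<^sub>R u c + (g * re) *\<^sub>R u e"
      unfolding y_eq wc(1) by (simp add: algebra_simps)
    ultimately show False using no_further_crossing[OF f, of c e] ce y by auto
  qed
qed

lemma crossing_weights:
  obtains p q r t where "0 < p" "0 < q" "0 < r" "0 < t"
    "w = p *\<^sub>R u 0 + q *\<^sub>R u 1" "w = r *\<^sub>R u j + t *\<^sub>R u (Suc j)"
proof -
  have "Suc 0 mod n = 1" "Suc j mod n = Suc j" using j_le by auto
  then have w0: "w \<in> sph_arc (u 0) (u 1)" and wj: "w \<in> sph_arc (u j) (u (Suc j))"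
    using crossing edge_eq_sph_arc[of 0 n u] edge_eq_sph_arc[of j n u] j_le by auto
  have "det3 (u 0) (u 1) (u j) \<noteq> 0" by (rule \<sigma>_nonzero)
  from sph_arc_in_cone[OF this w0] obtain p q where pq: "p \<ge> 0" "q \<ge> 0" "w = p *\<^sub>R u 0 + q *\<^sub>R u 1"
    and "w \<noteq> 0" unfolding in_cone_def by blast
  have "det3 (u j) (u (Suc j)) (u 0) \<noteq> 0" using det_nonzero j_ge j_le by auto
  from sph_arc_in_cone[OF this wj] obtain r t where rt: "r \<ge> 0" "t \<ge> 0" "w = r *\<^sub>R u j + t *\<^sub>R u (Suc j)"
    unfolding in_cone_def by blast
  have d: "det3 (u 1) (u j) (u (Suc j)) \<noteq> 0" "det3 (u 0) (u j) (u (Suc j)) \<noteq> 0"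
    "det3 (u 0) (u 1) (u (Suc j)) \<noteq> 0" "det3 (u 0) (u 1) (u j) \<noteq> 0"
    using det_nonzero j_ge j_le by auto
  have rel: "p *\<^sub>R u 0 + q *\<^sub>R u 1 + (- r) *\<^sub>R u j + (- t) *\<^sub>R u (Suc j) = 0"
    using pq(3) rt(3) by (simp add: algebra_simps)
  have "p \<noteq> 0"
  proof
    assume "p = 0"
    then have "q = 0" using rel det3_nonzero_independent[OF d(1), of q "- r" "- t"] by simp
    then show False using \<open>p = 0\<close> pq \<open>w \<noteq> 0\<close> by simp
  qed
  moreover have "q \<noteq> 0"
  proof
    assume "q = 0"
    then have "p = 0" using rel det3_nonzero_independent[OF d(2), of p "- r" "- t"] by simp
    then show False using \<open>q = 0\<close> pq \<open>w \<noteq> 0\<close> by simp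
  qed
  moreover have "r \<noteq> 0"
  proof
    assume "r = 0"
    then have "p = 0" using rel det3_nonzero_independent[OF d(3), of p q "- t"] by simp
    then show False using \<open>p \<noteq> 0\<close> by simp
  qed
  moreover have "t \<noteq> 0"
  proof
    assume "t = 0"
    then have "p = 0" using rel det3_nonzero_independent[OF d(4), of p q "- r"] by simp
    then show False using \<open>p \<noteq> 0\<close> by simp
  qed
  ultimately have "0 < p" "0 < q" "0 < r" "0 < t" using pq(1,2) rt(1,2) by auto
  then show ?thesis by (rule that[OF _ _ _ _ pq(3) rt(3)])
qed

text \<open>The 2-opt move reverses the path u 1, ..., u j; flip gives the new position of each vertex and
  old_edge the old edge that becomes edge k of u'.\<close>

definition u' :: "nat \<Rightarrow> real^3" where
  "u' = two_opt n u 0 j"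

definition flip :: "nat \<Rightarrow> nat" where
  "flip k = (if k = 0 then 0 else if k \<le> j then Suc j - k else k)"

definition old_edge :: "nat \<Rightarrow> nat" where
  "old_edge k = (if k < j then j - k else k)"

lemma u'_eq: "k < n \<Longrightarrow> u' k = u (flip k)"
proof -
  assume k: "k < n"
  have m: "(j + n - 0) mod n = j" using j_le by simp
  have "(j + n + 1 - k) mod n = Suc j - k" if "k \<le> j" "k \<noteq> 0"
  proof -
    have e: "j + n + 1 - k = (Suc j - k) + n" using that by simp
    have "Suc j - k < n" using that j_le by simp
    then show ?thesis unfolding e by simp
  qed
  moreover have "(j + k - j) mod n = k" using k by simp
  ultimately show ?thesis unfolding u'_def two_opt_def Let_def m flip_def by auto
qed

lemma flip_simps: "flip 0 = 0" "0 < k \<Longrightarrow> k \<le> j \<Longrightarrow> flip k = Suc j - k" "j < k \<Longrightarrow> flip k = k"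
  unfolding flip_def by auto

lemma polygon_u': "sph_polygon n u'"
  by (rule sph_polygon_reindex[OF polygon u'_eq])
     (use j_le in \<open>auto simp: flip_def inj_on_def split: if_splits\<close>)

lemma edge_u'_0: "edge n u' 0 = sph_arc (u 0) (u j)"
  using edge_eq_sph_arc[of 0 n u'] u'_eq n_ge_4 j_ge j_le by (simp add: flip_simps)

lemma edge_u'_j: "edge n u' j = sph_arc (u 1) (u (Suc j))"
  using edge_eq_sph_arc[of j n u'] u'_eq j_ge j_le by (simp add: flip_simps)

lemma edge_u'_old:
  assumes "k < n" "k \<noteq> 0" "k \<noteq> j" shows "edge n u' k = edge n u (old_edge k)"
proof (cases "k < j")
  case True
  then have "u' k = u (Suc (j - k))" "u' (Suc k mod n) = u (j - k)" "Suc (j - k) mod n = Suc (j - k)"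
    using assms j_le u'_eq by (auto simp: flip_simps Suc_diff_le)
  then show ?thesis
    using edge_eq_sph_arc[of k n u'] edge_eq_sph_arc[of "j - k" n u] assms True j_le
    by (simp add: old_edge_def sph_arc_commute)
next
  case False
  then have "u' k = u k" "u' (Suc k mod n) = u (Suc k mod n)"
    using assms u'_eq by (auto simp: flip_simps mod_Suc)
  then show ?thesis using edge_eq_sph_arc[of k n] assms False by (simp add: old_edge_def)
qed

lemma old_edge_bounds: "k < n \<Longrightarrow> k \<noteq> 0 \<Longrightarrow> k \<noteq> j \<Longrightarrow> old_edge k < n \<and> old_edge k \<noteq> 0 \<and> old_edge k \<noteq> j"
  using j_le by (auto simp: old_edge_def)

lemma old_edge_nonadjacent:
  assumes kl: "k < n" "l < n" "k \<noteq> 0" "k \<noteq> j" "l \<noteq> 0" "l \<noteq> j" and nadj: "\<not> adjacent_edges n k l"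
  shows "\<not> adjacent_edges n (old_edge k) (old_edge l)"
proof -
  have succ: "Suc x mod n = Suc x" if "x < j" for x using that j_le by simp
  have low_high: "\<not> adjacent_edges n (j - x) y" if "0 < x" "x < j" "j < y" "y < n" for x y
    using that j_le Suc_mod_eq_if[of y n] unfolding adjacent_edges_def by (simp add: succ) arith
  consider "k < j" "l < j" | "k < j" "j < l" | "j < k" "l < j" | "j < k" "j < l"
    using kl by fastforce
  then show ?thesis
  proof cases
    case 1
    then show ?thesis using nadj kl unfolding adjacent_edges_def old_edge_def
      by (simp add: succ Suc_diff_le) arith
  next
    case 2
    then show ?thesis using low_high[of k l] kl unfolding old_edge_def by simp
  next
    case 3
    then show ?thesis using low_high[of l k] kl unfolding old_edge_def adjacent_edges_def by auto
  next
    case 4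
    then show ?thesis using nadj unfolding old_edge_def by simp
  qed
qed

lemma turn_u'_0: "turn n u' 0 = det3 (u (n - 1)) (u 0) (u j)"
  using turn_eq[of 0 n u'] u'_eq n_ge_4 j_ge j_le by (simp add: flip_simps)

lemma turn_u'_1: "turn n u' 1 = det3 (u 0) (u j) (u (j - 1))"
  using turn_eq[of 1 n u'] u'_eq n_ge_4 j_ge j_le by (simp add: flip_simps numeral_2_eq_2)

lemma turn_u'_reversed: "1 < k \<Longrightarrow> k < j \<Longrightarrow> turn n u' k = - turn n u (Suc j - k)"
proof -
  assume k: "1 < k" "k < j"
  have idx: "k < n" "Suc k mod n = Suc k" "Suc j - k < n" "Suc (Suc j - k) mod n = Suc j - (k - 1)"
    "Suc j - k - 1 = j - k" "Suc j - k \<noteq> 0" using k j_le by auto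
  have u': "u' (k - 1) = u (Suc j - (k - 1))" "u' k = u (Suc j - k)" "u' (Suc k) = u (j - k)"
    using u'_eq[of "k - 1"] u'_eq[of k] u'_eq[of "Suc k"] flip_simps(2)[of "k - 1"] flip_simps(2)[of k]
      flip_simps(2)[of "Suc k"] k j_le by auto
  have "turn n u' k = det3 (u (Suc j - (k - 1))) (u (Suc j - k)) (u (j - k))"
    using turn_eq[OF idx(1), of u'] k unfolding idx(2) u' by (simp only: if_not_P not_gr0 less_imp_neq u')
  moreover have "turn n u (Suc j - k) = det3 (u (j - k)) (u (Suc j - k)) (u (Suc j - (k - 1)))"
    using turn_eq[OF idx(3), of u] unfolding idx(4,5) if_not_P[OF idx(6)] .
  ultimately show ?thesis using det3_swap(2)[of "u (j - k)" "u (Suc j - k)" "u (Suc j - (k - 1))"] by simp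
qed

lemma turn_u'_j: "turn n u' j = det3 (u 2) (u 1) (u (Suc j))"
  using turn_eq[of j n u'] u'_eq j_ge j_le by (simp add: flip_simps)

lemma turn_u'_Suc_j: "turn n u' (Suc j) = det3 (u 1) (u (Suc j)) (u (Suc (Suc j) mod n))"
  using turn_eq[of "Suc j" n u'] u'_eq j_ge j_le by (simp add: flip_simps mod_Suc)

lemma turn_u'_high: "Suc j < k \<Longrightarrow> k < n \<Longrightarrow> turn n u' k = turn n u k"
  using turn_eq[of k n u'] turn_eq[of k n u] u'_eq j_ge by (simp add: flip_simps mod_Suc)

text \<open>Turning signs are measured relative to the orientation \<sigma> of u 0, u 1, u j, which turns the
  four constraints at the switch into the same shape in every configuration.\<close>

definition positive_turn :: "(nat \<Rightarrow> real^3) \<Rightarrow> nat \<Rightarrow> bool" where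
  "positive_turn v = (\<lambda>k. 0 < \<sigma> * turn n v k)"

lemma not_positive_turn: "sph_polygon n v \<Longrightarrow> \<not> positive_turn v k \<longleftrightarrow> \<sigma> * turn n v k < 0"
  using turn_nonzero[of n v k] \<sigma>_nonzero unfolding positive_turn_def
  by (auto simp: linorder_not_less le_less mult_eq_0_iff)

lemma num_inflections_split:
  assumes "sph_polygon n v"
  shows "num_inflections n v = of_bool (positive_turn v 0 \<noteq> positive_turn v 1)
      + sign_changes (positive_turn v) 1 j + of_bool (positive_turn v j \<noteq> positive_turn v (Suc j))
      + sign_changes (positive_turn v) (Suc j) n"
proof -
  let ?c = "sign_changes (positive_turn v)"
  have "num_inflections n v = ?c 0 n"
    unfolding positive_turn_def by (rule num_inflections_eq_sign_changes[OF assms \<sigma>_nonzero])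
  moreover have "?c 0 n = ?c 0 1 + ?c 1 n" "?c 1 n = ?c 1 j + ?c j n" "?c j n = ?c j (Suc j) + ?c (Suc j) n"
    by (intro sign_changes_concat[symmetric]; use j_ge j_le in simp)+
  ultimately show ?thesis using sign_changes_Suc[of _ 0] sign_changes_Suc[of _ j] by simp
qed

text \<open>Along the reversed path the turning signs of u' are those of u read backwards and negated,
  so only the two end terms can change.\<close>

lemma sign_changes_u'_reversed_path:
  "sign_changes (positive_turn u') 1 j \<le> sign_changes (positive_turn u) 1 j
     + of_bool (positive_turn u' 1 = positive_turn u j) + of_bool (positive_turn u' j = positive_turn u 1)"
proof -
  let ?b = "positive_turn u" and ?b' = "positive_turn u'"
  have reversed: "?b' k = (\<not> ?b (1 + j - k))" if "1 < k" "k < j" for k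
    using turn_u'_reversed[OF that] not_positive_turn[OF polygon, of "Suc j - k"] that
    unfolding positive_turn_def by auto
  have "sign_changes ?b' 1 j \<le> sign_changes (\<lambda>k. \<not> ?b (1 + j - k)) 1 j
      + of_bool (?b' 1 \<noteq> (\<not> ?b (1 + j - 1))) + of_bool (?b' j \<noteq> (\<not> ?b (1 + j - j)))"
    by (rule sign_changes_update_ends) (use j_ge reversed in auto)
  then show ?thesis unfolding sign_changes_reflect by auto
qed

lemma sign_changes_u'_unchanged_path:
  "sign_changes (positive_turn u') (Suc j) n \<le> sign_changes (positive_turn u) (Suc j) n
     + of_bool (positive_turn u' (Suc j) \<noteq> positive_turn u (Suc j))
     + of_bool (positive_turn u' 0 \<noteq> positive_turn u 0)"
proof -
  let ?b = "positive_turn u" and ?b' = "positive_turn u'"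
  have "?b' n = ?b' 0" "?b n = ?b 0"
    using turn_mod[of n _ n] n_ge_4 unfolding positive_turn_def by auto
  moreover have "sign_changes ?b' (Suc j) n \<le> sign_changes ?b (Suc j) n
      + of_bool (?b' (Suc j) \<noteq> ?b (Suc j)) + of_bool (?b' n \<noteq> ?b n)"
    by (rule sign_changes_update_ends) (use j_le turn_u'_high in \<open>auto simp: positive_turn_def\<close>)
  ultimately show ?thesis by simp
qed

end

locale unique_crossing_weights = unique_crossing +
  fixes p q r t :: real
  assumes p: "0 < p" and q: "0 < q" and r: "0 < r" and t: "0 < t"
    and w_0: "w = p *\<^sub>R u 0 + q *\<^sub>R u 1" and w_j: "w = r *\<^sub>R u j + t *\<^sub>R u (Suc j)"
begin

lemma sign_0_j_Suc_j: "det3 (u 0) (u j) (u (Suc j)) * \<sigma> < 0"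
proof -
  let ?X = "det3 (u 0) (u j) (u (Suc j))"
  have "det3 (u 0) (u j) w = q * det3 (u 0) (u j) (u 1)" unfolding w_0 by (simp add: det3_simps)
  moreover have "det3 (u 0) (u j) w = t * ?X" unfolding w_j by (simp add: det3_simps)
  ultimately have "t * ?X = - q * \<sigma>" using det3_swap(3)[of "u 0" "u j" "u 1"] by simp
  then have "t * (?X * \<sigma>) = - q * (\<sigma> * \<sigma>)" by (simp only: mult.assoc[symmetric])
  moreover have "\<sigma> * \<sigma> > 0" using \<sigma>_nonzero not_real_square_gt_zero by blast
  ultimately have "t * (?X * \<sigma>) < 0" using q by (simp add: mult_pos_pos)
  then show ?thesis using t by (simp add: mult_less_0_iff)
qed

lemma sign_0_1_Suc_j: "det3 (u 0) (u 1) (u (Suc j)) * \<sigma> < 0"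
proof -
  let ?X = "det3 (u 0) (u 1) (u (Suc j))"
  have "det3 (u 0) (u 1) w = 0" unfolding w_0 by (simp add: det3_simps)
  moreover have "det3 (u 0) (u 1) w = r * \<sigma> + t * ?X" unfolding w_j by (simp add: det3_simps)
  ultimately have "t * (?X * \<sigma>) = - r * (\<sigma> * \<sigma>)" by algebra
  moreover have "\<sigma> * \<sigma> > 0" using \<sigma>_nonzero not_real_square_gt_zero by blast
  ultimately have "t * (?X * \<sigma>) < 0" using r by (simp add: mult_pos_pos)
  then show ?thesis using t by (simp add: mult_less_0_iff)
qed

lemma sign_j_Suc_j_1: "0 < det3 (u j) (u (Suc j)) (u 1) * \<sigma>"
proof -
  let ?X = "det3 (u 0) (u j) (u (Suc j))" and ?Z = "det3 (u j) (u (Suc j)) (u 1)"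
  have "det3 (u j) (u (Suc j)) w = 0" unfolding w_j by (simp add: det3_simps)
  moreover have "det3 (u j) (u (Suc j)) w = p * ?X + q * ?Z"
  proof -
    have "det3 (u j) (u (Suc j)) (u 0) = ?X" by (rule det3_rotate[symmetric])
    then show ?thesis unfolding w_0 by (simp add: det3_simps)
  qed
  ultimately have "q * (?Z * \<sigma>) = - p * (?X * \<sigma>)" by algebra
  moreover have "p * (?X * \<sigma>) < 0" by (rule mult_pos_neg[OF p sign_0_j_Suc_j])
  ultimately have "q * (?Z * \<sigma>) > 0" by linarith
  then show ?thesis using q by (simp add: zero_less_mult_iff)
qed

lemma diagonals_disjoint: "sph_arc (u 0) (u j) \<inter> sph_arc (u 1) (u (Suc j)) = {}"
proof (rule ccontr)
  assume "sph_arc (u 0) (u j) \<inter> sph_arc (u 1) (u (Suc j)) \<noteq> {}"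
  then obtain x where x: "x \<in> sph_arc (u 0) (u j)" "x \<in> sph_arc (u 1) (u (Suc j))" by blast
  have d: "det3 (u 0) (u j) (u 1) \<noteq> 0" "det3 (u 1) (u (Suc j)) (u 0) \<noteq> 0"
    using det_nonzero j_ge j_le by auto
  obtain \<mu> \<nu> where m: "\<mu> \<ge> 0" "\<nu> \<ge> 0" "x = \<mu> *\<^sub>R u 0 + \<nu> *\<^sub>R u j" and "x \<noteq> 0"
    using sph_arc_in_cone[OF d(1) x(1)] unfolding in_cone_def by blast
  obtain \<mu>' \<nu>' where m': "\<mu>' \<ge> 0" "\<nu>' \<ge> 0" "x = \<mu>' *\<^sub>R u 1 + \<nu>' *\<^sub>R u (Suc j)"
    using sph_arc_in_cone[OF d(2) x(2)] unfolding in_cone_def by blast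
  have tu: "t *\<^sub>R u (Suc j) = p *\<^sub>R u 0 + q *\<^sub>R u 1 - r *\<^sub>R u j"
    using w_0 w_j by (metis add_diff_cancel_left')
  have "(t * \<mu> - \<nu>' * p) *\<^sub>R u 0 + (- (t * \<mu>' + \<nu>' * q)) *\<^sub>R u 1 + (t * \<nu> + \<nu>' * r) *\<^sub>R u j
      = t *\<^sub>R (\<mu> *\<^sub>R u 0 + \<nu> *\<^sub>R u j) - t *\<^sub>R (\<mu>' *\<^sub>R u 1) - \<nu>' *\<^sub>R (p *\<^sub>R u 0 + q *\<^sub>R u 1 - r *\<^sub>R u j)"
    by (simp add: algebra_simps)
  also have "\<dots> = t *\<^sub>R x - t *\<^sub>R (\<mu>' *\<^sub>R u 1 + \<nu>' *\<^sub>R u (Suc j))"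
    unfolding m(3) tu[symmetric] by (simp add: algebra_simps)
  also have "\<dots> = 0" using m'(3) by simp
  finally have "- (t * \<mu>' + \<nu>' * q) = 0" using det3_nonzero_independent[OF \<sigma>_nonzero] by blast
  then have "t * \<mu>' + \<nu>' * q = 0" by simp
  then have "\<mu>' = 0" "\<nu>' = 0" using t q m'(1,2) by (smt (verit) mult_nonneg_nonneg mult_pos_pos)+
  then show False using m'(3) \<open>x \<noteq> 0\<close> by simp
qed

lemma edge_u'_0_disjoint:
  assumes "m < n" "m \<noteq> 0" "m \<noteq> j" "\<not> adjacent_edges n 0 m"
  shows "edge n u' 0 \<inter> edge n u' m = {}"
proof -
  let ?f = "old_edge m"
  have "sph_arc (u 0) (u j) \<inter> edge n u ?f = {}"
    by (rule diagonal_avoids_edge[where b = 1 and e = "Suc j", OF _ _ _ _ _ _ _ _ _ _ _ w_0 p q w_j r t],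
        use assms old_edge_bounds[of m] j_ge j_le outside_triangle_0j in
          \<open>auto simp: old_edge_def adjacent_edges_def mod_Suc split: if_splits\<close>)
  then show ?thesis using edge_u'_0 edge_u'_old assms by simp
qed

lemma edge_u'_j_disjoint:
  assumes "m < n" "m \<noteq> 0" "m \<noteq> j" "\<not> adjacent_edges n j m"
  shows "edge n u' j \<inter> edge n u' m = {}"
proof -
  let ?f = "old_edge m"
  have w: "w = q *\<^sub>R u 1 + p *\<^sub>R u 0" "w = t *\<^sub>R u (Suc j) + r *\<^sub>R u j"
    using w_0 w_j by (simp_all add: add.commute)
  have "sph_arc (u 1) (u (Suc j)) \<inter> edge n u ?f = {}"
    by (rule diagonal_avoids_edge[where b = 0 and e = j, OF _ _ _ _ _ _ _ _ _ _ _ w(1) q p w(2) t r],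
        use assms old_edge_bounds[of m] j_ge j_le outside_triangle_1Sj in
          \<open>auto simp: old_edge_def adjacent_edges_def mod_Suc split: if_splits\<close>)
  then show ?thesis using edge_u'_j edge_u'_old assms by simp
qed

lemma self_intersections_u': "self_intersections n u' = {}"
proof -
  have "edge n u' k \<inter> edge n u' l = {}" if kl: "k < l" "l < n" "\<not> adjacent_edges n k l" for k l
  proof -
    have sym: "\<not> adjacent_edges n l k" using kl(3) unfolding adjacent_edges_def by auto
    consider "k = 0 \<and> l = j" | "k = 0 \<and> l \<noteq> j" | "k = j" | "k \<noteq> 0 \<and> k \<noteq> j \<and> l = j"
      | "k \<noteq> 0 \<and> k \<noteq> j \<and> l \<noteq> j" by blast
    then show ?thesis
    proof cases
      case 1 then show ?thesis using diagonals_disjoint edge_u'_0 edge_u'_j by simp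
    next
      case 2 then show ?thesis using edge_u'_0_disjoint kl by simp
    next
      case 3 then show ?thesis using edge_u'_j_disjoint kl by simp
    next
      case 4 then show ?thesis using edge_u'_j_disjoint[of k] sym kl by (simp add: Int_commute)
    next
      case 5
      then have "k < n" "l \<noteq> 0" using kl by auto
      then have "\<not> adjacent_edges n (old_edge k) (old_edge l)"
        using old_edge_nonadjacent 5 kl by simp
      then show ?thesis
        using crossing_pair[of "old_edge k" "old_edge l"] old_edge_bounds[of k] old_edge_bounds[of l]
          edge_u'_old[of k] edge_u'_old[of l] 5 kl \<open>k < n\<close> \<open>l \<noteq> 0\<close>
        by (auto simp: doubleton_eq_iff)
    qed
  qed
  then show ?thesis unfolding self_intersections_def by auto
qed

subsection \<open>The four turning signs at the switch\<close>

lemma positive_turn_0: "positive_turn u 0 \<longrightarrow> positive_turn u' 0"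
proof
  assume pos: "positive_turn u 0"
  show "positive_turn u' 0"
  proof (rule ccontr)
    assume "\<not> positive_turn u' 0"
    then have neg: "\<sigma> * turn n u' 0 < 0" using not_positive_turn polygon_u' by blast
    have "turn n u 0 = det3 (u 0) (u 1) (u (n - 1))"
      using turn_eq[of 0 n u] n_ge_4 det3_rotate[of "u (n - 1)" "u 0" "u 1"] by simp
    then have "0 < det3 (u 0) (u 1) (u (n - 1)) * \<sigma>"
      using pos unfolding positive_turn_def by (simp add: mult.commute)
    moreover have "0 < det3 (u 0) (u (n - 1)) (u j) * \<sigma>"
      using neg det3_swap(1)[of "u 0" "u (n - 1)" "u j"] unfolding turn_u'_0 by (simp add: mult.commute)
    moreover have "\<not> (0 < det3 (u 0) (u 1) (u (n - 1)) * \<sigma> \<and> 0 < det3 (u 0) (u (n - 1)) (u j) * \<sigma>)"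
      by (rule corner_excluded[where f = "n - 1" and e = "Suc j", OF _ _ _ _ \<sigma>_nonzero w_0 q w_j r t])
         (use n_ge_4 j_ge j_le outside_triangle_0j in auto)
    ultimately show False by blast
  qed
qed

lemma positive_turn_j_or_1: "positive_turn u j \<or> positive_turn u' 1"
proof (rule ccontr)
  let ?D = "det3 (u j) (u (Suc j)) (u 0)"
  assume "\<not> (positive_turn u j \<or> positive_turn u' 1)"
  then have neg: "turn n u j * \<sigma> < 0" "turn n u' 1 * \<sigma> < 0"
    using not_positive_turn polygon polygon_u' by (simp_all add: mult.commute)
  have D: "?D * \<sigma> < 0" using sign_0_j_Suc_j det3_rotate[of "u 0" "u j" "u (Suc j)"] by simp
  have "turn n u j = det3 (u j) (u (Suc j)) (u (j - 1))"
    using turn_eq[of j n u] j_ge j_le det3_rotate[of "u (j - 1)" "u j" "u (Suc j)"] by simp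
  then have "0 < det3 (u j) (u (Suc j)) (u (j - 1)) * ?D"
    using mult_neg_same_sign[OF neg(1) D] by simp
  moreover have "turn n u' 1 = det3 (u j) (u (j - 1)) (u 0)"
    using turn_u'_1 det3_rotate[of "u 0" "u j" "u (j - 1)"] by simp
  then have "0 < det3 (u j) (u (j - 1)) (u 0) * ?D"
    using mult_neg_same_sign[OF neg(2) D] by simp
  moreover have "\<not> (0 < det3 (u j) (u (Suc j)) (u (j - 1)) * ?D \<and> 0 < det3 (u j) (u (j - 1)) (u 0) * ?D)"
    by (rule corner_excluded[where f = "j - 1" and e = 1, OF _ _ _ _ _ w_j t w_0 p q])
       (use det_nonzero j_ge j_le outside_triangle_0j in \<open>auto simp: in_cone3_commute\<close>)
  ultimately show False by blast
qed

lemma positive_turn_1_or_j: "positive_turn u 1 \<or> positive_turn u' j"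
proof (rule ccontr)
  let ?D = "det3 (u 1) (u 0) (u (Suc j))"
  assume "\<not> (positive_turn u 1 \<or> positive_turn u' j)"
  then have neg: "turn n u 1 * \<sigma> < 0" "turn n u' j * \<sigma> < 0"
    using not_positive_turn polygon polygon_u' by (simp_all add: mult.commute)
  have D: "0 < ?D * \<sigma>" using sign_0_1_Suc_j det3_swap(1)[of "u 1" "u 0" "u (Suc j)"] by simp
  have "turn n u 1 = - det3 (u 1) (u 0) (u 2)"
    using turn_eq[of 1 n u] n_ge_4 det3_swap(1)[of "u 0" "u 1" "u 2"] by (simp add: numeral_2_eq_2)
  then have "0 < det3 (u 1) (u 0) (u 2) * ?D"
    using mult_pos_same_sign[OF _ D, of "det3 (u 1) (u 0) (u 2)"] neg(1) by simp
  moreover have "turn n u' j = - det3 (u 1) (u 2) (u (Suc j))"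
    using turn_u'_j det3_swap(1)[of "u 2" "u 1" "u (Suc j)"] by simp
  then have "0 < det3 (u 1) (u 2) (u (Suc j)) * ?D"
    using mult_pos_same_sign[OF _ D, of "det3 (u 1) (u 2) (u (Suc j))"] neg(2) by simp
  moreover have "\<not> (0 < det3 (u 1) (u 0) (u 2) * ?D \<and> 0 < det3 (u 1) (u 2) (u (Suc j)) * ?D)"
    by (rule corner_excluded[where f = 1 and e = j and pa = q, OF _ _ _ _ _ _ p _ t r])
       (use det_nonzero n_ge_4 j_ge j_le outside_triangle_1Sj w_0 w_j in \<open>auto simp: add.commute\<close>)
  ultimately show False by blast
qed

lemma positive_turn_Suc_j: "positive_turn u (Suc j) \<longrightarrow> positive_turn u' (Suc j)"
proof
  let ?x = "Suc (Suc j) mod n" and ?D = "det3 (u (Suc j)) (u j) (u 1)"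
  assume pos: "positive_turn u (Suc j)"
  show "positive_turn u' (Suc j)"
  proof (rule ccontr)
    assume "\<not> positive_turn u' (Suc j)"
    then have neg: "turn n u' (Suc j) * \<sigma> < 0"
      using not_positive_turn polygon_u' by (simp add: mult.commute)
    have D: "?D * \<sigma> < 0" using sign_j_Suc_j_1 det3_swap(1)[of "u (Suc j)" "u j" "u 1"] by simp
    have "turn n u (Suc j) = - det3 (u (Suc j)) (u j) (u ?x)"
      using turn_eq[of "Suc j" n u] j_le det3_swap(1)[of "u j" "u (Suc j)" "u ?x"] by simp
    then have "0 < det3 (u (Suc j)) (u j) (u ?x) * ?D"
      using mult_neg_same_sign[OF _ D, of "det3 (u (Suc j)) (u j) (u ?x)"] pos
      unfolding positive_turn_def by (simp add: mult.commute)
    moreover have "turn n u' (Suc j) = det3 (u (Suc j)) (u ?x) (u 1)"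
      using turn_u'_Suc_j det3_rotate[of "u 1" "u (Suc j)" "u ?x"] by simp
    then have "0 < det3 (u (Suc j)) (u ?x) (u 1) * ?D"
      using mult_neg_same_sign[OF neg D] by simp
    moreover have "\<not> (0 < det3 (u (Suc j)) (u j) (u ?x) * ?D \<and> 0 < det3 (u (Suc j)) (u ?x) (u 1) * ?D)"
      by (rule corner_excluded[where f = "Suc j" and e = 0 and pa = t, OF _ _ _ _ _ _ r _ q p])
         (use det_nonzero n_ge_4 j_ge j_le outside_triangle_1Sj w_0 w_j in
           \<open>auto simp: add.commute in_cone3_commute mod_Suc\<close>)
    ultimately show False by blast
  qed
qed

lemma num_inflections_u'_le: "num_inflections n u' \<le> num_inflections n u + 2"
proof -
  let ?b = "positive_turn u" and ?b' = "positive_turn u'"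
  have "of_bool (?b' 0 \<noteq> ?b 0) + of_bool (?b' 0 \<noteq> ?b' 1) + of_bool (?b' 1 = ?b j)
      + of_bool (?b' j = ?b 1) + of_bool (?b' j \<noteq> ?b' (Suc j)) + of_bool (?b' (Suc j) \<noteq> ?b (Suc j))
      \<le> of_bool (?b 0 \<noteq> ?b 1) + of_bool (?b j \<noteq> ?b (Suc j)) + (2::nat)"
    by (rule switch_sign_changes_bound[OF positive_turn_0 positive_turn_j_or_1 positive_turn_1_or_j
          positive_turn_Suc_j])
  then show ?thesis
    using num_inflections_split[OF polygon] num_inflections_split[OF polygon_u']
      sign_changes_u'_reversed_path sign_changes_u'_unchanged_path by linarith
qed

end

lemma (in unique_crossing) two_opt_bound:
  "2 * num_self_intersections n u' + num_inflections n u' \<le> 2 + num_inflections n u"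
proof -
  obtain p q r t where "0 < p" "0 < q" "0 < r" "0 < t"
    "w = p *\<^sub>R u 0 + q *\<^sub>R u 1" "w = r *\<^sub>R u j + t *\<^sub>R u (Suc j)"
    by (rule crossing_weights)
  then interpret unique_crossing_weights n j u w p q r t
    by unfold_locales
  show ?thesis using self_intersections_u' num_inflections_u'_le
    unfolding num_self_intersections_def by simp
qed

subsection \<open>Reduction to the normalized situation\<close>

lemma crossing_pair_unique:
  assumes one: "num_self_intersections n u = 1"
    and ij: "i < n" "j < n" "\<not> adjacent_edges n i j" "edge n u i \<inter> edge n u j \<noteq> {}"
    and kl: "k < n" "l < n" "\<not> adjacent_edges n k l" "edge n u k \<inter> edge n u l \<noteq> {}"
  shows "{k, l} = {i, j}"
proof -
  have mem: "(min a b, max a b) \<in> self_intersections n u"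
    if "a < n" "b < n" "\<not> adjacent_edges n a b" "edge n u a \<inter> edge n u b \<noteq> {}" for a b
    using that unfolding self_intersections_def adjacent_edges_def
    by (cases "a \<le> b") (auto simp: min_def max_def Int_commute)
  obtain x where "self_intersections n u = {x}"
    using one unfolding num_self_intersections_def by (rule card_1_singletonE)
  then have "(min k l, max k l) = (min i j, max i j)" using mem[OF ij] mem[OF kl] by auto
  then show ?thesis by (auto simp: min_def max_def doubleton_eq_iff split: if_splits)
qed

lemma rotation_offset:
  assumes "i < n" "j < n" "\<not> adjacent_edges n i j"
  shows "2 \<le> (j + n - i) mod n" "(j + n - i) mod n + 2 \<le> n"
    "((j + n - i) mod n + i) mod n = j" "(Suc ((j + n - i) mod n) + i) mod n = Suc j mod n"
proof -
  define j' where "j' = (j + n - i) mod n"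
  have j': "j' = (if i \<le> j then j - i else j + n - i)"
  proof (cases "i \<le> j")
    case True
    then obtain d where "j = i + d" using le_Suc_ex by blast
    then show ?thesis unfolding j'_def using assms(2) by simp
  qed (use assms(1) j'_def in simp)
  have "i \<noteq> j" "Suc i mod n \<noteq> j" "Suc j mod n \<noteq> i"
    using assms(3) unfolding adjacent_edges_def by auto
  then show "2 \<le> j'" "j' + 2 \<le> n" using j' assms(1,2) by (auto simp: mod_Suc split: if_splits)
  show "(j' + i) mod n = j" using j' assms(1,2) by (auto split: if_splits)
  then show "(Suc j' + i) mod n = Suc j mod n" by (metis add_Suc mod_Suc_eq)
qed

lemma rotate_polygon_crossing_pair:
  assumes one: "num_self_intersections n u = 1"
    and ij: "i < n" "j < n" "\<not> adjacent_edges n i j" "edge n u i \<inter> edge n u j \<noteq> {}"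
    and kl: "k < n" "l < n" "\<not> adjacent_edges n k l"
      "edge n (rotate_polygon n i u) k \<inter> edge n (rotate_polygon n i u) l \<noteq> {}"
  shows "{k, l} = {0, (j + n - i) mod n}"
proof -
  let ?j = "(j + n - i) mod n"
  have "0 < n" using ij(1) by simp
  have "{(k + i) mod n, (l + i) mod n} = {i, j}"
  proof (rule crossing_pair_unique[OF one ij])
    show "(k + i) mod n < n" "(l + i) mod n < n" using \<open>0 < n\<close> by simp_all
    show "\<not> adjacent_edges n ((k + i) mod n) ((l + i) mod n)"
      using kl(3) adjacent_edges_rotate[OF kl(1,2)] by simp
    show "edge n u ((k + i) mod n) \<inter> edge n u ((l + i) mod n) \<noteq> {}"
      using kl(4) by (simp add: edge_rotate_polygon)
  qed
  moreover have "?j < n" "(0 + i) mod n = i" "(?j + i) mod n = j"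
    using rotation_offset[OF ij(1-3)] ij(1) by auto
  ultimately have img: "(\<lambda>x. (x + i) mod n) ` {k, l} = (\<lambda>x. (x + i) mod n) ` {0, ?j}" by simp
  have inj: "inj_on (\<lambda>x. (x + i) mod n) {..<n}"
    using bij_betw_rotate_index[OF \<open>0 < n\<close>] by (rule bij_betw_imp_inj_on)
  have subsets: "{k, l} \<subseteq> {..<n}" "{0, ?j} \<subseteq> {..<n}" using kl(1,2) \<open>?j < n\<close> by auto
  show ?thesis by (rule iffD1[OF inj_on_image_eq_iff[OF inj subsets] img])
qed

lemma unique_crossing_rotate_polygon:
  assumes polygon: "sph_polygon n u" and ij: "i < n" "j < n" "\<not> adjacent_edges n i j"
    and one: "num_self_intersections n u = 1"
    and cross: "edge n u i \<inter> edge n u j = {w}"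
    and empty_i_j: "\<forall>k<n. k \<noteq> i \<and> k \<noteq> j \<longrightarrow> u k \<notin> sph_triangle (u i) (u j) w"
    and empty_Si_Sj: "\<forall>k<n. k \<noteq> Suc i mod n \<and> k \<noteq> Suc j mod n \<longrightarrow>
           u k \<notin> sph_triangle (u (Suc i mod n)) (u (Suc j mod n)) w"
  shows "unique_crossing n ((j + n - i) mod n) (rotate_polygon n i u) w"
proof -
  let ?v = "rotate_polygon n i u" and ?j = "(j + n - i) mod n"
  have off: "2 \<le> ?j" "?j + 2 \<le> n" "(?j + i) mod n = j" "(Suc ?j + i) mod n = Suc j mod n"
    using rotation_offset[OF ij] by blast+
  have rot_eq: "(a + i) mod n = (b + i) mod n \<longleftrightarrow> a = b" if "a < n" "b < n" for a b
    using rotate_index_inj that by blast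
  have v: "?v 0 = u i" "?v ?j = u j" "?v 1 = u (Suc i mod n)" "?v (Suc ?j) = u (Suc j mod n)"
    using off ij(1) by (simp_all add: rotate_polygon_def)
  have "0 < n" using ij(1) by simp
  show ?thesis
  proof
    show "sph_polygon n ?v" by (rule sph_polygon_rotate_polygon[OF polygon])
    show "2 \<le> ?j" "?j + 2 \<le> n" by (fact off)+
  next
    fix k l assume kl: "k < n" "l < n" "\<not> adjacent_edges n k l" "edge n ?v k \<inter> edge n ?v l \<noteq> {}"
    have "edge n u i \<inter> edge n u j \<noteq> {}" using cross by simp
    then show "{k, l} = {0, ?j}" by (rule rotate_polygon_crossing_pair[OF one ij _ kl])
  next
    show "edge n ?v 0 \<inter> edge n ?v ?j = {w}"
      using cross off ij(1) by (simp add: edge_rotate_polygon)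
  next
    fix k assume "k < n" "k \<noteq> 0" "k \<noteq> ?j"
    then show "?v k \<notin> sph_triangle (?v 0) (?v ?j) w"
      using empty_i_j rot_eq[of k 0] rot_eq[of k ?j] off ij(1) \<open>0 < n\<close> unfolding v
      by (auto simp: rotate_polygon_def)
  next
    fix k assume "k < n" "k \<noteq> 1" "k \<noteq> Suc ?j"
    then show "?v k \<notin> sph_triangle (?v 1) (?v (Suc ?j)) w"
      using empty_Si_Sj rot_eq[of k 1] rot_eq[of k "Suc ?j"] off ij(1) \<open>0 < n\<close> unfolding v
      by (auto simp: rotate_polygon_def)
  qed
qed

theorem lemma15:
  fixes n i j :: nat and u :: "nat \<Rightarrow> real^3" and w :: "real^3"
  assumes "sph_polygon n u"
    and "i < n" and "j < n" and "\<not> adjacent_edges n i j"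
    and "num_self_intersections n u = 1"
    and "edge n u i \<inter> edge n u j = {w}"
    and "\<forall>k<n. k \<noteq> i \<and> k \<noteq> j \<longrightarrow> u k \<notin> sph_triangle (u i) (u j) w"
    and "\<forall>k<n. k \<noteq> Suc i mod n \<and> k \<noteq> Suc j mod n \<longrightarrow>
           u k \<notin> sph_triangle (u (Suc i mod n)) (u (Suc j mod n)) w"
  shows "2 * num_self_intersections n u + num_inflections n u
           \<ge> 2 * num_self_intersections n (two_opt n u i j) + num_inflections n (two_opt n u i j)"
proof -
  let ?v = "rotate_polygon n i u" and ?j = "(j + n - i) mod n"
  interpret unique_crossing n ?j ?v w
    by (rule unique_crossing_rotate_polygon[OF assms])
  have "two_opt n u i j = u'"
    unfolding u'_def by (rule two_opt_rotate_polygon[OF assms(2,3)])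
  moreover have "num_inflections n ?v = num_inflections n u"
    using num_inflections_rotate_polygon assms(2) by simp
  ultimately show ?thesis using two_opt_bound assms(5) by simp
qed

end
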